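(* For all even integers $n\geq 4$ and every $\lambda>-\frac12$, the best Markov constant satisfies $$\frac{(n+2)(n+2\lambda)\big(n+\lambda+\frac12\big)^2}{(2\lambda+1)(2\lambda+5)}\leq c_n^2(\lambda)\leq\frac{n(n+2\lambda)(n+2\lambda+2)\sqrt{(n+2)(n+2\lambda+3)}}{2(2\lambda+1)\sqrt{2\lambda+5}}.$$
   Context: $\mathcal{P}_n$ denotes the class of real algebraic polynomials of degree at most $n$. For $\lambda>-1/2$, $w_\lambda(t)=(1-t^2)^{\lambda-1/2}$ on $(-1,1)$ and $\Vert f\Vert_{w_\lambda}=\big(\int_{-1}^1 w_\lambda(t)f^2(t)\,dt\big)^{1/2}$. The best Markov constant is $c_n(\lambda)=\sup\{\Vert p'\Vert_{w_\lambda}/\Vert p\Vert_{w_\lambda}: p\in\mathcal{P}_n,\ p\neq 0\}$. *)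

theory Defs
  imports "HOL-Analysis.Analysis" "HOL-Computational_Algebra.Polynomial"
begin

definition gegen_weight :: "real \<Rightarrow> real \<Rightarrow> real" where
  "gegen_weight lam t = (1 - t\<^sup>2) powr (lam - 1/2)"

definition wnorm :: "real \<Rightarrow> (real \<Rightarrow> real) \<Rightarrow> real" where
  "wnorm lam f = sqrt (LINT t:{-1<..<1}|lborel. gegen_weight lam t * (f t)\<^sup>2)"

definition markov_const :: "nat \<Rightarrow> real \<Rightarrow> real" where
  "markov_const n lam = Sup {wnorm lam (poly (pderiv p)) / wnorm lam (poly p) | p :: real poly.
       degree p \<le> n \<and> p \<noteq> 0}"

end

theory Submission
  imports Defs
begin

text \<open>Expand \<open>p\<close> in the monic Gegenbauer polynomials \<open>C\<^sub>k\<close>, which are orthogonal for the weight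
  \<open>(1 - t\<^sup>2) powr (lam - 1/2)\<close>. In the corresponding orthonormal basis the form
  \<open>p \<mapsto> \<parallel>p'\<parallel>\<^sup>2\<close> on polynomials of degree at most \<open>n\<close> has a positive semidefinite matrix \<open>A\<close>,
  and \<open>c\<^sub>n(lam)\<^sup>2\<close> is its largest eigenvalue. By the connection formula between the parameters
  \<open>lam\<close> and \<open>lam + 1\<close>, \<open>C\<^sub>m' = m C\<^sub>m\<^sub>-\<^sub>1 + \<gamma>\<^sub>m C\<^sub>m\<^sub>-\<^sub>2'\<close>; hence \<open>A\<close> only couples indices of equal
  parity, and its entries obey two-step recurrences that give closed forms for the trace of the
  even block and the Frobenius norms of both blocks. The upper bound is
  \<open>\<parallel>A\<parallel> \<le> \<parallel>A\<parallel>\<^sub>F\<close> on each block. For the lower bound, \<open>\<Sum>\<^sub>m A\<^sub>k\<^sub>m\<^sup>2 = \<parallel>A e\<^sub>k\<parallel>\<^sup>2 \<le> \<parallel>A\<parallel> A\<^sub>k\<^sub>k\<close>, so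
  summing over the even block gives \<open>\<parallel>A\<^sub>e\<^sub>v\<^sub>e\<^sub>n\<parallel>\<^sub>F\<^sup>2 \<le> c\<^sub>n(lam)\<^sup>2 tr A\<^sub>e\<^sub>v\<^sub>e\<^sub>n\<close>. Both bounds are then
  polynomial inequalities in \<open>n\<close> and \<open>lam\<close>.\<close>

lemma poly_zero_or_degree_less:
  assumes "\<And>i. i \<ge> k \<Longrightarrow> coeff r i = 0"
  shows "r = 0 \<or> degree r < k"
proof (cases "r = 0")
  case False
  then have "coeff r (degree r) \<noteq> 0" by simp
  then have "\<not> degree r \<ge> k" using assms by blast
  then show ?thesis by simp
qed simp

lemma degree_sum_le:
  assumes "\<And>i. i \<in> A \<Longrightarrow> degree (f i) \<le> n"
  shows "degree (\<Sum>i\<in>A. f i) \<le> n"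
  using assms
proof (induction A rule: infinite_finite_induct)
  case (insert x F)
  then show ?case by (simp add: degree_add_le)
qed auto

lemma pCons0_one_mult_eq: "[:0, 1:] * r = monom 1 1 * r"
  by (rule poly_eqI) (simp add: coeff_monom_mult coeff_pCons split: nat.split)

lemma coeff_pCons0_one_mult: "coeff ([:0,1:] * (p :: real poly)) i = (if i = 0 then 0 else coeff p (i - 1))"
  unfolding pCons0_one_mult_eq coeff_monom_mult by auto

lemma double_sum_union_disjoint:
  assumes "finite A" "finite B" "A \<inter> B = {}"
  shows "(\<Sum>i\<in>A \<union> B. \<Sum>j\<in>A \<union> B. f i j)
       = (\<Sum>i\<in>A. \<Sum>j\<in>A. f i j) + (\<Sum>i\<in>A. \<Sum>j\<in>B. f i j) + (\<Sum>i\<in>B. \<Sum>j\<in>A. f i j) + (\<Sum>i\<in>B. \<Sum>j\<in>B. f i j)"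
  using assms by (simp add: sum.union_disjoint sum.distrib add_ac)

lemma quadratic_form_le_frobenius:
  fixes H :: "'a \<Rightarrow> 'a \<Rightarrow> real"
  assumes S: "finite S" and N: "\<And>k. k \<in> S \<Longrightarrow> N k > 0"
  shows "(\<Sum>k\<in>S. \<Sum>m\<in>S. x k * x m * H k m)
         \<le> sqrt (\<Sum>k\<in>S. \<Sum>m\<in>S. (H k m)\<^sup>2 / (N k * N m)) * (\<Sum>k\<in>S. x k * x k * N k)"
proof -
  define r where "r k = sqrt (N k)" for k
  have r2: "r k * r k = N k" "r k \<noteq> 0" if "k \<in> S" for k
    using N[OF that] by (auto simp: r_def)
  define a where "a i = H (fst i) (snd i) / (r (fst i) * r (snd i))" for i
  define b where "b i = r (fst i) * r (snd i) * (x (fst i) * x (snd i))" for i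
  have "(\<Sum>k\<in>S. \<Sum>m\<in>S. x k * x m * H k m) = (\<Sum>i\<in>S \<times> S. a i * b i)"
    by (auto simp: sum.cartesian_product a_def b_def r2 intro!: sum.cong)
  also have "\<dots> \<le> \<bar>\<Sum>i\<in>S \<times> S. a i * b i\<bar>" by simp
  also have "\<dots> \<le> sqrt (\<Sum>i\<in>S \<times> S. (a i)\<^sup>2) * sqrt (\<Sum>i\<in>S \<times> S. (b i)\<^sup>2)"
    using Cauchy_Schwarz_ineq_sum[of a b "S \<times> S"]
    by (metis real_sqrt_abs real_sqrt_le_mono real_sqrt_mult)
  also have "(\<Sum>i\<in>S \<times> S. (a i)\<^sup>2) = (\<Sum>k\<in>S. \<Sum>m\<in>S. (H k m)\<^sup>2 / (N k * N m))"
    by (auto simp: sum.cartesian_product a_def power_divide power2_eq_square r2 mult_ac intro!: sum.cong)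
  also have "(\<Sum>i\<in>S \<times> S. (b i)\<^sup>2) = (\<Sum>k\<in>S. x k * x k * N k)\<^sup>2"
    by (auto simp: sum.cartesian_product b_def power2_eq_square r2 sum_product mult_ac intro!: sum.cong)
  also have "sqrt ((\<Sum>k\<in>S. x k * x k * N k)\<^sup>2) = (\<Sum>k\<in>S. x k * x k * N k)"
    using N by (simp add: sum_nonneg less_imp_le)
  finally show ?thesis .
qed

section \<open>The Gegenbauer weight\<close>

lemma integrable_one_minus_powr:
  fixes a :: real assumes a: "a > -1"
  shows "(\<lambda>t. (1 - t) powr a) absolutely_integrable_on {-1..1}"
proof -
  have "((\<lambda>t. (1 - t) powr a) has_integral ((\<lambda>t. - ((1 - t) powr (a+1) / (a+1))) 1 - (\<lambda>t. - ((1 - t) powr (a+1) / (a+1))) (-1))) {-1..1}"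
  proof (rule fundamental_theorem_of_calculus_interior)
    show "-1 \<le> (1::real)" by simp
    show "continuous_on {-1..1} (\<lambda>t. - ((1 - t) powr (a+1) / (a+1)))"
      using a by (intro continuous_intros continuous_on_powr') auto
    show "((\<lambda>t. - ((1 - t) powr (a+1) / (a+1))) has_vector_derivative (1 - x) powr a) (at x)"
      if "x \<in> {-1<..<1}" for x
    proof -
      have "((\<lambda>t. (1 - t) powr (a+1)) has_real_derivative (a+1) * (1-x) powr (a+1-1) * (-1)) (at x)"
        using that by (intro derivative_eq_intros) auto
      then have h: "((\<lambda>t. (1 - t) powr (a+1)) has_real_derivative - ((a+1) * (1-x) powr a)) (at x)"
        by simp
      have "((\<lambda>t. - ((1 - t) powr (a+1) / (a+1))) has_real_derivative (-(- ((a+1) * (1-x) powr a) / (a+1)))) (at x)"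
        by (intro DERIV_minus DERIV_cdivide h)
      then have "((\<lambda>t. - ((1 - t) powr (a+1) / (a+1))) has_real_derivative (1-x) powr a) (at x)"
        using a by simp
      then show ?thesis by (simp add: has_real_derivative_iff_has_vector_derivative)
    qed
  qed
  then have "(\<lambda>t. (1 - t) powr a) integrable_on {-1..1}" by blast
  then show ?thesis by (rule nonnegative_absolutely_integrable_1) auto
qed

lemma integrable_one_plus_powr:
  fixes a :: real assumes a: "a > -1"
  shows "(\<lambda>t. (1 + t) powr a) absolutely_integrable_on {-1..1}"
  using integrable_one_minus_powr[OF a] absolutely_integrable_reflect_real[where f = "\<lambda>t. (1 - t) powr a" and a = "-1" and b = 1]
  by simp

lemma powr_one_minus_sq_le:
  fixes a t :: real assumes t: "t \<in> {-1<..<1}"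
  shows "(1 - t\<^sup>2) powr a \<le> (1 - t) powr a + (1 + t) powr a"
proof -
  have pos: "1 - t > 0" "1 + t > 0" using t by auto
  have prod: "(1 - t\<^sup>2) powr a = (1 - t) powr a * (1 + t) powr a"
    using pos by (simp add: powr_mult[symmetric] power2_eq_square algebra_simps)
  have "(1 - t) powr a \<le> 1 \<or> (1 + t) powr a \<le> 1"
  proof (cases "a \<ge> 0"; cases "t \<ge> 0")
    assume "a \<ge> 0" "t \<ge> 0"
    then have "(1 - t) powr a \<le> 1 powr a" using pos by (intro powr_mono2) auto
    then show ?thesis by simp
  next
    assume "a \<ge> 0" "\<not> t \<ge> 0"
    then have "(1 + t) powr a \<le> 1 powr a" using pos by (intro powr_mono2) auto
    then show ?thesis by simp
  next
    assume "\<not> a \<ge> 0" "t \<ge> 0"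
    then have "(1 + t) powr a \<le> 1 powr a" using pos by (intro powr_mono2') auto
    then show ?thesis by simp
  next
    assume "\<not> a \<ge> 0" "\<not> t \<ge> 0"
    then have "(1 - t) powr a \<le> 1 powr a" using pos by (intro powr_mono2') auto
    then show ?thesis by simp
  qed
  then show ?thesis unfolding prod
    using powr_ge_zero[of "1 - t" a] powr_ge_zero[of "1 + t" a]
    by (smt (verit) mult_left_le_one_le mult_right_le_one_le)
qed

lemma continuous_on_gegen_weight: "continuous_on {-1<..<1} (gegen_weight lam)"
proof -
  have ne: "1 - t\<^sup>2 \<noteq> 0" if "t \<in> {-1<..<1}" for t :: real
  proof -
    from that have "\<bar>t\<bar> < 1" by auto
    then have "t\<^sup>2 < 1" by (simp add: abs_square_less_1)
    then show ?thesis by simp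
  qed
  have c1: "continuous_on {-1<..<1} (\<lambda>t::real. 1 - t\<^sup>2)" by (intro continuous_intros)
  have "continuous_on {-1<..<1} (\<lambda>t::real. (1 - t\<^sup>2) powr (lam - 1/2))"
    by (rule continuous_on_powr[OF c1 continuous_on_const]) (use ne in blast)
  then show ?thesis by (simp add: gegen_weight_def[abs_def])
qed

lemma gegen_weight_absolutely_integrable:
  assumes lam: "lam > -1/2" and f: "continuous_on {-1..1} f"
  shows "(\<lambda>t. gegen_weight lam t * f t) absolutely_integrable_on {-1<..<1}"
proof -
  obtain B where B: "B \<ge> 0" "\<And>x. x \<in> {-1..1} \<Longrightarrow> norm (f x) \<le> B"
    using continuous_on_compact_bound[OF compact_Icc f] by blast
  define a where "a = lam - 1/2"
  have a: "a > -1" using lam by (simp add: a_def)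
  let ?g = "\<lambda>t. B * ((1 - t) powr a + (1 + t) powr a)"
  have "?g absolutely_integrable_on {-1..1}"
    using integrable_one_minus_powr[OF a] integrable_one_plus_powr[OF a]
    by (intro set_integrable_mult_right set_integral_add(1))
  then have "?g integrable_on {-1..1}"
    using set_lebesgue_integral_eq_integral(1) by blast
  then have gi: "?g integrable_on {-1<..<1}"
    by (simp add: integrable_on_open_interval_real)
  have fc: "continuous_on {-1<..<1} f" by (rule continuous_on_subset[OF f]) auto
  show ?thesis
  proof (rule measurable_bounded_by_integrable_imp_absolutely_integrable[OF _ _ gi])
    show "(\<lambda>t. gegen_weight lam t * f t) \<in> borel_measurable (lebesgue_on {-1<..<1})"
      using continuous_on_gegen_weight fc
      by (intro continuous_imp_measurable_on_sets_lebesgue continuous_intros) auto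
    show "{-1<..<1::real} \<in> sets lebesgue" by simp
    fix x :: real assume x: "x \<in> {-1<..<1}"
    have "norm (gegen_weight lam x * f x) = gegen_weight lam x * norm (f x)"
      by (simp add: gegen_weight_def abs_mult)
    also have "\<dots> \<le> ((1 - x) powr a + (1 + x) powr a) * B"
      using powr_one_minus_sq_le[OF x] B(2)[of x] x
      by (intro mult_mono) (auto simp: gegen_weight_def a_def)
    finally show "norm (gegen_weight lam x * f x) \<le> ?g x" by (simp add: mult.commute)
  qed
qed

lemma gegen_weight_set_integrable:
  assumes lam: "lam > -1/2" and f: "continuous_on {-1..1} f"
  shows "set_integrable lborel {-1<..<1} (\<lambda>t. gegen_weight lam t * f t)"
proof -
  have fc: "continuous_on {-1<..<1} f" by (rule continuous_on_subset[OF f]) auto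
  have m: "(\<lambda>x. indicat_real {-1<..<1} x *\<^sub>R (gegen_weight lam x * f x)) \<in> borel_measurable borel"
    using continuous_on_gegen_weight fc
    by (intro borel_measurable_continuous_on_indicator continuous_intros) auto
  have m': "(\<lambda>x. indicat_real {-1<..<1} x *\<^sub>R (gegen_weight lam x * f x)) \<in> borel_measurable lborel"
    using m by simp
  have "integrable lebesgue (\<lambda>x. indicat_real {-1<..<1} x *\<^sub>R (gegen_weight lam x * f x))"
    using gegen_weight_absolutely_integrable[OF lam f] by (simp add: set_integrable_def)
  then show ?thesis
    unfolding set_integrable_def using integrable_completion[OF m'] by blast
qed

lemma gegen_weight_LINT_eq_integral:
  assumes lam: "lam > -1/2" and f: "continuous_on {-1..1} f"
  shows "(LINT t:{-1<..<1}|lborel. gegen_weight lam t * f t) = integral {-1<..<1} (\<lambda>t. gegen_weight lam t * f t)"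
  by (rule set_borel_integral_eq_integral(2)[OF gegen_weight_set_integrable[OF lam f]])

section \<open>Weighted integrals of polynomials\<close>

definition wint :: "real \<Rightarrow> real poly \<Rightarrow> real" where
  "wint lam q = integral {-1<..<1} (\<lambda>t. gegen_weight lam t * poly q t)"

lemma gegen_weight_poly_integrable:
  assumes "lam > -1/2"
  shows "(\<lambda>t. gegen_weight lam t * poly q t) integrable_on {-1<..<1}"
proof -
  have "continuous_on {-1..1} (\<lambda>t. poly q t)"
    by (intro continuous_on_poly continuous_on_id)
  then show ?thesis
    using set_lebesgue_integral_eq_integral(1)[OF gegen_weight_absolutely_integrable[OF assms]] by blast
qed

lemma wint_add: "lam > -1/2 \<Longrightarrow> wint lam (p + q) = wint lam p + wint lam q"
  unfolding wint_def using gegen_weight_poly_integrable[of lam p] gegen_weight_poly_integrable[of lam q]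
  by (simp add: distrib_left integral_add)

lemma wint_smult: "wint lam (smult c p) = c * wint lam p"
  unfolding wint_def by (simp add: mult.left_commute)

lemma wint_minus: "wint lam (- p) = - wint lam p"
  using wint_smult[of lam "-1" p] by simp

lemma wint_diff: "lam > -1/2 \<Longrightarrow> wint lam (p - q) = wint lam p - wint lam q"
  using wint_add[of lam p "-q"] wint_minus[of lam q] by simp

lemma wint_0 [simp]: "wint lam 0 = 0"
  unfolding wint_def by simp

lemma wint_sum: "lam > -1/2 \<Longrightarrow> wint lam (\<Sum>i\<in>A. f i) = (\<Sum>i\<in>A. wint lam (f i))"
  by (induction A rule: infinite_finite_induct) (auto simp: wint_add)

lemma wint_sq_expand:
  assumes lam: "lam > -1/2"
  shows "wint lam ((a + b) * (a + b)) = wint lam (a * a) + 2 * wint lam (a * b) + wint lam (b * b)"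
proof -
  have eq: "(a + b) * (a + b) = a * a + (a * b + (a * b + b * b))" by (simp add: algebra_simps)
  show ?thesis unfolding eq wint_add[OF lam] by simp
qed

lemma wint_nonneg:
  assumes "lam > -1/2" "\<And>t. t \<in> {-1<..<1} \<Longrightarrow> poly p t \<ge> 0"
  shows "wint lam p \<ge> 0"
  unfolding wint_def
  by (rule integral_nonneg[OF gegen_weight_poly_integrable[OF assms(1)]])
     (use assms(2) in \<open>auto simp: gegen_weight_def\<close>)

lemma wint_one_pos:
  assumes lam: "lam > -1/2"
  shows "wint lam 1 > 0"
proof -
  define c where "c = min 1 ((3/4) powr (lam - 1/2))"
  have cpos: "c > 0" by (simp add: c_def)
  have le: "c \<le> gegen_weight lam t" if "t \<in> {-1/2..1/2}" for t :: real
  proof -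
    have "\<bar>t\<bar> \<le> 1/2" using that by auto
    then have "\<bar>t\<bar>\<^sup>2 \<le> (1/2)\<^sup>2" by (intro power_mono) auto
    then have "t\<^sup>2 \<le> (1/2)\<^sup>2" by simp
    then have h: "3/4 \<le> 1 - t\<^sup>2" "1 - t\<^sup>2 \<le> 1" by (auto simp: power2_eq_square)
    show ?thesis
    proof (cases "lam - 1/2 \<ge> 0")
      case True
      then have "(3/4) powr (lam - 1/2) \<le> (1 - t\<^sup>2) powr (lam - 1/2)"
        using h by (intro powr_mono2) auto
      then show ?thesis by (simp add: c_def gegen_weight_def)
    next
      case False
      then have "1 powr (lam - 1/2) \<le> (1 - t\<^sup>2) powr (lam - 1/2)"
        using h by (intro powr_mono2') auto
      then show ?thesis by (simp add: c_def gegen_weight_def)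
    qed
  qed
  have wi: "(\<lambda>t. gegen_weight lam t * poly 1 t) integrable_on {-1<..<1}"
    by (rule gegen_weight_poly_integrable[OF lam])
  then have wi2: "(\<lambda>t. gegen_weight lam t * poly 1 t) integrable_on {-1/2..1/2}"
    by (rule integrable_on_subinterval) auto
  have "integral {-1/2..1/2} (\<lambda>t::real. c) \<le> integral {-1/2..1/2} (\<lambda>t. gegen_weight lam t * poly 1 t)"
    using le wi2 by (intro integral_le) auto
  also have "\<dots> \<le> integral {-1<..<1} (\<lambda>t. gegen_weight lam t * poly 1 t)"
    using wi2 wi by (intro integral_subset_le) (auto simp: gegen_weight_def)
  finally show ?thesis using cpos by (simp add: wint_def)
qed

lemma gegen_weight_plus_one:
  assumes "t \<in> {-1<..<1}"
  shows "gegen_weight (lam + 1) t = (1 - t\<^sup>2) * gegen_weight lam t"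
proof -
  have "\<bar>t\<bar> < 1" using assms by auto
  then have "1 - t\<^sup>2 > 0" by (simp add: abs_square_less_1)
  moreover have "gegen_weight (lam + 1) t = (1 - t\<^sup>2) powr (lam - 1/2) * (1 - t\<^sup>2) powr 1"
    unfolding gegen_weight_def by (subst powr_add[symmetric]) (simp add: algebra_simps)
  ultimately show ?thesis by (simp add: gegen_weight_def)
qed

lemma has_real_derivative_weighted_poly:
  assumes x: "x \<in> {-1<..<1}"
  shows "((\<lambda>t. (1 - t\<^sup>2) powr (lam + 1/2) * poly q t) has_real_derivative
          gegen_weight lam x * poly ([:1,0,-1:] * pderiv q - smult (2*lam+1) ([:0,1:] * q)) x) (at x)"
proof -
  have "\<bar>x\<bar> < 1" using x by auto
  then have pos: "1 - x\<^sup>2 > 0" by (simp add: abs_square_less_1)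
  have w: "(1 - x\<^sup>2) powr (lam + 1/2) = (1 - x\<^sup>2) * gegen_weight lam x"
    using gegen_weight_plus_one[OF x] by (simp add: gegen_weight_def add.commute)
  have "((\<lambda>t. (1 - t\<^sup>2) powr (lam + 1/2) * poly q t) has_real_derivative
         (lam + 1/2) * (1 - x\<^sup>2) powr (lam - 1/2) * (- (2 * x)) * poly q x
         + poly (pderiv q) x * (1 - x\<^sup>2) powr (lam + 1/2)) (at x)"
    using pos by (auto intro!: derivative_eq_intros)
  moreover have "(lam + 1/2) * (1 - x\<^sup>2) powr (lam - 1/2) * (- (2 * x)) * poly q x
         + poly (pderiv q) x * (1 - x\<^sup>2) powr (lam + 1/2)
       = gegen_weight lam x * poly ([:1,0,-1:] * pderiv q - smult (2*lam+1) ([:0,1:] * q)) x"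
    unfolding w by (simp add: gegen_weight_def power2_eq_square algebra_simps)
  ultimately show ?thesis by simp
qed

text \<open>The integrand is the derivative of \<open>(1 - t\<^sup>2) powr (lam + 1/2) * poly q t\<close>, which vanishes at
  both endpoints.\<close>

lemma wint_weighted_pderiv_eq_0:
  assumes lam: "lam > -1/2"
  shows "wint lam ([:1,0,-1:] * pderiv q - smult (2*lam+1) ([:0,1:] * q)) = 0"
proof -
  define F where "F = (\<lambda>t::real. (1 - t\<^sup>2) powr (lam + 1/2) * poly q t)"
  let ?g = "\<lambda>t. gegen_weight lam t * poly ([:1,0,-1:] * pderiv q - smult (2*lam+1) ([:0,1:] * q)) t"
  have "(?g has_integral (F 1 - F (-1))) {-1..1}"
  proof (rule fundamental_theorem_of_calculus_interior)
    have "0 \<le> 1 - t\<^sup>2" if "t \<in> {-1..1}" for t :: real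
      using that abs_square_le_1[of t] by auto
    then have "continuous_on {-1..1} (\<lambda>t::real. (1 - t\<^sup>2) powr (lam + 1/2))"
      using lam by (intro continuous_on_powr' continuous_intros) auto
    then show "continuous_on {-1..1} F" unfolding F_def
      by (intro continuous_on_mult continuous_on_poly continuous_on_id)
    show "(F has_vector_derivative ?g x) (at x)" if "x \<in> {-1<..<1}" for x
      using has_real_derivative_weighted_poly[OF that] unfolding F_def
      by (simp add: has_real_derivative_iff_has_vector_derivative)
  qed simp
  moreover have "F 1 = 0" "F (-1) = 0" by (simp_all add: F_def)
  ultimately have "(?g has_integral 0) {-1<..<1}" by (simp add: has_integral_Icc_iff_Ioo)
  then show ?thesis unfolding wint_def by (rule integral_unique)
qed

lemma wint_param_plus_one: "wint (lam + 1) q = wint lam ([:1,0,-1:] * q)"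
  unfolding wint_def
  by (intro integral_cong) (simp add: gegen_weight_plus_one, simp add: power2_eq_square algebra_simps)

section \<open>Monic Gegenbauer polynomials\<close>

text \<open>The coefficients of the monic Gegenbauer polynomial of degree \<open>k\<close> are computed downwards
  from the leading one by the recurrence that makes it an eigenpolynomial of \<open>gegen_op mu\<close>.
  The divisor vanishes only if \<open>i + k + 2 * mu = 0\<close>, which \<open>mu > -1/2\<close> excludes; without
  that hypothesis the values are junk.\<close>

function gegen_coeff :: "real \<Rightarrow> nat \<Rightarrow> nat \<Rightarrow> real" where
  "gegen_coeff mu k i = (if k < i then 0 else if i = k then 1 else if Suc i = k then 0
      else real ((i+2)*(i+1)) * gegen_coeff mu k (i+2) / (real i * (real i + 2*mu) - real k * (real k + 2*mu)))"
  by pat_completeness auto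

termination by (relation "Wellfounded.measure (\<lambda>(mu,k,i). k - i)") auto

declare gegen_coeff.simps [simp del]

lemma gegen_coeff_above: "k < i \<Longrightarrow> gegen_coeff mu k i = 0"
  by (subst gegen_coeff.simps) simp

lemma gegen_coeff_top [simp]: "gegen_coeff mu k k = 1"
  by (subst gegen_coeff.simps) simp

lemma gegen_coeff_step: "i + 2 \<le> k \<Longrightarrow> gegen_coeff mu k i = real ((i+2)*(i+1)) * gegen_coeff mu k (i+2) / (real i * (real i + 2*mu) - real k * (real k + 2*mu))"
  by (subst gegen_coeff.simps) simp

lemma gegen_coeff_parity: "odd (k - i) \<Longrightarrow> gegen_coeff mu k i = 0"
proof (induction "k - i" arbitrary: i rule: less_induct)
  case less
  show ?case
  proof (cases "k < i")
    case True then show ?thesis by (simp add: gegen_coeff_above)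
  next
    case False
    then have "i \<noteq> k" using less.prems by auto
    show ?thesis
    proof (cases "Suc i = k")
      case True then show ?thesis by (subst gegen_coeff.simps) simp
    next
      case False
      with \<open>\<not> k < i\<close> \<open>i \<noteq> k\<close> have "i + 2 \<le> k" by auto
      then have "gegen_coeff mu k (i+2) = 0"
        using less.hyps[of "i+2"] less.prems by auto
      then show ?thesis using \<open>i + 2 \<le> k\<close> by (simp add: gegen_coeff_step)
    qed
  qed
qed

lemma gegen_coeff_rec:
  assumes mu: "mu > -1/2"
  shows "gegen_coeff mu k i * (real i * (real i + 2*mu) - real k * (real k + 2*mu)) = real ((i+2)*(i+1)) * gegen_coeff mu k (i+2)"
proof (cases "i + 2 \<le> k")
  case True
  have "real i * (real i + 2*mu) - real k * (real k + 2*mu) = (real i - real k) * (real i + real k + 2*mu)"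
    by (simp add: algebra_simps)
  moreover have "real i - real k \<noteq> 0" using True by simp
  moreover have "real i + real k + 2*mu > 0" using True mu by simp
  ultimately have "real i * (real i + 2*mu) - real k * (real k + 2*mu) \<noteq> 0" by simp
  then show ?thesis using True by (simp add: gegen_coeff_step)
next
  case False
  then have "k < i + 2" by simp
  then have "gegen_coeff mu k (i+2) = 0" by (simp add: gegen_coeff_above)
  moreover have "gegen_coeff mu k i = 0 \<or> i = k"
  proof (cases "k < i")
    case True then show ?thesis by (simp add: gegen_coeff_above)
  next
    case False
    then have "i = k \<or> Suc i = k" using \<open>k < i+2\<close> by auto
    then show ?thesis by (auto simp: gegen_coeff.simps[of mu k i])
  qed
  ultimately show ?thesis by auto
qed

definition gegen :: "real \<Rightarrow> nat \<Rightarrow> real poly" where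
  "gegen mu k = Poly (map (gegen_coeff mu k) [0..<Suc k])"

lemma coeff_gegen: "coeff (gegen mu k) i = gegen_coeff mu k i"
  by (auto simp: gegen_def nth_default_def gegen_coeff_above simp del: upt_Suc)

lemma degree_gegen [simp]: "degree (gegen mu k) = k"
proof (rule antisym)
  show "degree (gegen mu k) \<le> k" by (rule degree_le) (simp add: coeff_gegen gegen_coeff_above)
  show "k \<le> degree (gegen mu k)" by (rule le_degree) (simp add: coeff_gegen)
qed

lemma gegen_0 [simp]: "gegen mu 0 = 1"
  by (simp add: gegen_def)

lemma gegen_Suc0: "gegen mu (Suc 0) = [:0, 1:]"
  by (rule poly_eqI) (auto simp: coeff_gegen gegen_coeff_above gegen_coeff_parity coeff_pCons split: nat.splits)

definition one_minus_sq :: "real poly" where "one_minus_sq = [:1, 0, -1:]"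

lemma one_minus_sq_eq: "one_minus_sq * r = r - monom 1 2 * r"
proof -
  have e: "one_minus_sq = 1 - monom 1 2"
    by (rule poly_eqI) (auto simp: one_minus_sq_def coeff_monom coeff_pCons coeff_1 split: nat.splits)
  show ?thesis unfolding e by (simp add: left_diff_distrib)
qed

lemma degree_one_minus_sq: "degree one_minus_sq = 2"
  by (simp add: one_minus_sq_def)

definition gegen_op :: "real \<Rightarrow> real poly \<Rightarrow> real poly" where
  "gegen_op mu p = one_minus_sq * pderiv (pderiv p) - smult (2*mu+1) ([:0,1:] * pderiv p)"

lemma coeff_gegen_op:
  "coeff (gegen_op mu p) i = real ((i+2)*(i+1)) * coeff p (i+2) - real i * (real i + 2*mu) * coeff p i"
proof -
  have A: "coeff (one_minus_sq * pderiv (pderiv p)) i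
        = real ((i+2)*(i+1)) * coeff p (i+2) - real i * (real i - 1) * coeff p i"
  proof (cases "i \<ge> 2")
    case True
    then obtain j where j: "i = j + 2" by (metis add.commute le_add_diff_inverse)
    show ?thesis unfolding one_minus_sq_eq j coeff_diff coeff_monom_mult
      by (simp add: coeff_pderiv algebra_simps)
  next
    case False
    then have "i = 0 \<or> i = 1" by auto
    then show ?thesis unfolding one_minus_sq_eq coeff_diff coeff_monom_mult
      by (auto simp: coeff_pderiv algebra_simps)
  qed
  have B: "coeff ([:0,1:] * pderiv p) i = real i * coeff p i"
  proof (cases i)
    case 0 then show ?thesis by (simp add: pCons0_one_mult_eq coeff_monom_mult)
  next
    case (Suc j) then show ?thesis by (simp add: pCons0_one_mult_eq coeff_monom_mult coeff_pderiv)
  qed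
  show ?thesis unfolding gegen_op_def coeff_diff coeff_smult A B by (simp add: algebra_simps)
qed

lemma gegen_op_gegen:
  assumes mu: "mu > -1/2"
  shows "gegen_op mu (gegen mu k) = smult (- (real k * (real k + 2*mu))) (gegen mu k)"
proof (rule poly_eqI)
  fix i
  show "coeff (gegen_op mu (gegen mu k)) i = coeff (smult (- (real k * (real k + 2*mu))) (gegen mu k)) i"
    unfolding coeff_gegen_op coeff_smult coeff_gegen
    using gegen_coeff_rec[OF mu, of k i] by (simp add: algebra_simps)
qed

lemma wint_mult_gegen_op:
  assumes mu: "mu > -1/2"
  shows "wint mu (f * gegen_op mu g) = - wint mu (one_minus_sq * pderiv f * pderiv g)"
proof -
  have "one_minus_sq * pderiv (f * pderiv g) - smult (2*mu+1) ([:0,1:] * (f * pderiv g))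
        = f * gegen_op mu g + one_minus_sq * pderiv f * pderiv g"
    unfolding gegen_op_def pderiv_mult by (simp add: algebra_simps)
  then have "wint mu (f * gegen_op mu g + one_minus_sq * pderiv f * pderiv g) = 0"
    using wint_weighted_pderiv_eq_0[OF mu, of "f * pderiv g"] by (simp add: one_minus_sq_def)
  then show ?thesis using wint_add[OF mu] by simp
qed

lemma wint_gegen_op_sym:
  assumes mu: "mu > -1/2"
  shows "wint mu (f * gegen_op mu g) = wint mu (g * gegen_op mu f)"
  using wint_mult_gegen_op[OF mu, of f g] wint_mult_gegen_op[OF mu, of g f] by (simp add: mult_ac)

lemma wint_gegen_orthogonal:
  assumes mu: "mu > -1/2" and km: "k \<noteq> m"
  shows "wint mu (gegen mu k * gegen mu m) = 0"
proof -
  have "wint mu (gegen mu k * gegen_op mu (gegen mu m)) = wint mu (gegen mu m * gegen_op mu (gegen mu k))"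
    by (rule wint_gegen_op_sym[OF mu])
  moreover have "wint mu (gegen mu k * gegen_op mu (gegen mu m)) = (- (real m * (real m + 2*mu))) * wint mu (gegen mu k * gegen mu m)"
    by (simp only: gegen_op_gegen[OF mu] mult_smult_right wint_smult)
  moreover have "wint mu (gegen mu m * gegen_op mu (gegen mu k)) = (- (real k * (real k + 2*mu))) * wint mu (gegen mu m * gegen mu k)"
    by (simp only: gegen_op_gegen[OF mu] mult_smult_right wint_smult)
  ultimately have "(- (real m * (real m + 2*mu))) * wint mu (gegen mu k * gegen mu m)
           = (- (real k * (real k + 2*mu))) * wint mu (gegen mu k * gegen mu m)"
    by (simp add: mult.commute)
  then have "(real k * (real k + 2*mu) - real m * (real m + 2*mu)) * wint mu (gegen mu k * gegen mu m) = 0"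
    by (simp add: algebra_simps)
  moreover have "real k * (real k + 2*mu) - real m * (real m + 2*mu) \<noteq> 0"
  proof -
    have "real k * (real k + 2*mu) - real m * (real m + 2*mu) = (real k - real m) * (real k + real m + 2*mu)"
      by (simp add: algebra_simps)
    moreover have "real k - real m \<noteq> 0" using km by simp
    moreover have "real k + real m + 2*mu > 0" using km mu by (cases k; cases m) auto
    ultimately show ?thesis by simp
  qed
  ultimately show ?thesis by simp
qed

lemma gegen_span:
  assumes "degree p \<le> d"
  shows "\<exists>x. p = (\<Sum>j\<le>d. smult (x j) (gegen mu j))"
  using assms
proof (induction d arbitrary: p)
  case 0
  then obtain c where "p = [:c:]" by (metis degree_eq_zeroE le_zero_eq)
  then show ?case by (intro exI[of _ "\<lambda>_. c"]) simp
next
  case (Suc d)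
  define c where "c = coeff p (Suc d)"
  define p' where "p' = p - smult c (gegen mu (Suc d))"
  have "degree p' \<le> d"
  proof (rule degree_le, intro allI impI)
    fix i assume "d < i"
    then show "coeff p' i = 0"
      using Suc.prems
      by (cases "i = Suc d") (auto simp: p'_def c_def coeff_gegen gegen_coeff_above coeff_eq_0)
  qed
  then obtain x where x: "p' = (\<Sum>j\<le>d. smult (x j) (gegen mu j))" using Suc.IH by blast
  define x' where "x' = x(Suc d := c)"
  have "(\<Sum>j\<le>Suc d. smult (x' j) (gegen mu j)) = (\<Sum>j\<le>d. smult (x j) (gegen mu j)) + smult c (gegen mu (Suc d))"
    by (simp add: x'_def)
  also have "\<dots> = p" using x by (simp add: p'_def)
  finally show ?case by metis
qed

lemma wint_gegen_orthogonal_lower: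
  assumes mu: "mu > -1/2" and q: "q = 0 \<or> degree q < k"
  shows "wint mu (gegen mu k * q) = 0"
proof (cases "q = 0")
  case False
  with q have dq: "degree q < k" by simp
  then have "degree q \<le> k - 1" by simp
  then obtain x where x: "q = (\<Sum>j\<le>k-1. smult (x j) (gegen mu j))" using gegen_span by blast
  have "wint mu (gegen mu k * q) = (\<Sum>j\<le>k-1. x j * wint mu (gegen mu k * gegen mu j))"
    unfolding x sum_distrib_left by (simp add: wint_sum[OF mu] wint_smult[symmetric] mult_ac)
  also have "\<dots> = 0"
    using dq by (intro sum.neutral ballI) (auto simp: wint_gegen_orthogonal[OF mu])
  finally show ?thesis .
qed simp

section \<open>Norms and the Cauchy--Schwarz inequality\<close>

definition gegen_norm2 :: "real \<Rightarrow> nat \<Rightarrow> real" where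
  "gegen_norm2 mu k = wint mu (gegen mu k * gegen mu k)"

definition gegen_norm2_ratio :: "real \<Rightarrow> nat \<Rightarrow> real" where
  "gegen_norm2_ratio mu k = real ((k+2)*(k+1)) / (4*(real k + 1 + mu)) - real ((k+1)*k) / (4*(real k + mu))"

lemma gegen_coeff_second:
  assumes mu: "mu > -1/2"
  shows "gegen_coeff mu (k+2) k = - real ((k+2)*(k+1)) / (4*(real k + 1 + mu))"
proof -
  have "gegen_coeff mu (k+2) k * (real k * (real k + 2*mu) - real (k+2) * (real (k+2) + 2*mu)) = real ((k+2)*(k+1))"
    using gegen_coeff_rec[OF mu, of "k+2" k] by simp
  moreover have "real k * (real k + 2*mu) - real (k+2) * (real (k+2) + 2*mu) = - (4*(real k + 1 + mu))"
    by (simp add: algebra_simps)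
  moreover have "4*(real k + 1 + mu) \<noteq> 0" using mu by simp
  ultimately show ?thesis by (simp add: field_simps)
qed

lemma gegen_norm2_Suc_eq:
  assumes mu: "mu > -1/2"
  shows "gegen_norm2 mu (Suc k) = wint mu (gegen mu (Suc k) * ([:0,1:] * gegen mu k))"
proof -
  define r where "r = gegen mu (Suc k) - [:0,1:] * gegen mu k"
  have "r = 0 \<or> degree r < Suc k"
  proof (rule poly_zero_or_degree_less)
    fix i assume "i \<ge> Suc k"
    then show "coeff r i = 0"
      by (cases "i = Suc k")
        (auto simp: r_def coeff_pCons0_one_mult coeff_pCons coeff_gegen gegen_coeff_above split: nat.split)
  qed
  moreover have "gegen mu (Suc k) * gegen mu (Suc k) = gegen mu (Suc k) * ([:0,1:] * gegen mu k) + gegen mu (Suc k) * r"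
    by (simp add: r_def algebra_simps)
  ultimately show ?thesis
    using wint_gegen_orthogonal_lower[OF mu, of r "Suc k"] wint_add[OF mu] by (simp add: gegen_norm2_def)
qed

text \<open>The three-term recurrence, up to a remainder that is orthogonal to \<open>gegen mu k\<close>.\<close>

lemma gegen_three_term_remainder:
  fixes mu :: real and k :: nat
  assumes mu: "mu > -1/2"
  defines "r \<equiv> [:0,1:] * gegen mu (Suc k) - gegen mu (Suc (Suc k)) - smult (gegen_norm2_ratio mu k) (gegen mu k)"
  shows "r = 0 \<or> degree r < k"
proof (rule poly_zero_or_degree_less)
  fix i assume i: "i \<ge> k"
  consider "i = k" | "i = Suc k" | "i = Suc (Suc k)" | "i > Suc (Suc k)" using i by linarith
  then show "coeff r i = 0"
  proof cases
    case 1
    have "4 * (real k + 1 + mu) > 0" using mu by auto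
    then show ?thesis
    proof (cases k)
      case (Suc j)
      have "4 * (real j + 1 + mu) > 0" using mu by auto
      with 1 Suc show ?thesis
        using \<open>4 * (real k + 1 + mu) > 0\<close> gegen_coeff_second[OF mu, of k] gegen_coeff_second[OF mu, of j]
        by (simp add: r_def coeff_pCons0_one_mult coeff_gegen gegen_norm2_ratio_def) (simp add: field_simps)
    qed (use 1 gegen_coeff_second[OF mu, of k] in \<open>simp add: r_def coeff_pCons0_one_mult coeff_gegen gegen_norm2_ratio_def\<close>)
  qed (auto simp: r_def coeff_pCons0_one_mult coeff_pCons coeff_gegen gegen_coeff_parity gegen_coeff_above
    split: nat.split)
qed

lemma gegen_norm2_Suc:
  assumes mu: "mu > -1/2"
  shows "gegen_norm2 mu (Suc k) = gegen_norm2_ratio mu k * gegen_norm2 mu k"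
proof -
  define r where "r = [:0,1:] * gegen mu (Suc k) - gegen mu (Suc (Suc k)) - smult (gegen_norm2_ratio mu k) (gegen mu k)"
  have "gegen mu (Suc k) * ([:0,1:] * gegen mu k)
      = gegen mu k * gegen mu (Suc (Suc k)) + smult (gegen_norm2_ratio mu k) (gegen mu k * gegen mu k) + gegen mu k * r"
    by (simp add: r_def algebra_simps)
  then show ?thesis
    using gegen_norm2_Suc_eq[OF mu] wint_gegen_orthogonal[OF mu, of k "Suc (Suc k)"]
      wint_gegen_orthogonal_lower[OF mu gegen_three_term_remainder[OF mu]] wint_add[OF mu] wint_smult
    by (simp add: gegen_norm2_def r_def)
qed

lemma gegen_norm2_ratio_pos:
  assumes mu: "mu > -1/2"
  shows "gegen_norm2_ratio mu k > 0"
proof (cases k)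
  case 0
  then show ?thesis using mu by (simp add: gegen_norm2_ratio_def)
next
  case (Suc j)
  have p1: "real k + mu > 0" "real k + 1 + mu > 0" using mu Suc by auto
  have "real ((k+2)*(k+1)) * (4*(real k + mu)) - real ((k+1)*k) * (4*(real k + 1 + mu)) = 4 * real (k+1) * (real k + 2*mu)"
    by (simp add: algebra_simps)
  moreover have "4 * real (k+1) * (real k + 2*mu) > 0" using mu Suc by simp
  ultimately have key: "real ((k+1)*k) * (4*(real k + 1 + mu)) < real ((k+2)*(k+1)) * (4*(real k + mu))" by linarith
  have "real ((k+1)*k) / (4*(real k + mu)) < real ((k+2)*(k+1)) / (4*(real k + 1 + mu))"
    using p1 key by (simp add: frac_less_eq, intro divide_neg_pos, linarith, (intro mult_pos_pos; linarith))
  then show ?thesis by (simp add: gegen_norm2_ratio_def)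
qed

lemma gegen_norm2_pos:
  assumes mu: "mu > -1/2"
  shows "gegen_norm2 mu k > 0"
proof (induction k)
  case 0 then show ?case using wint_one_pos[OF mu] by (simp add: gegen_norm2_def)
next
  case (Suc k) then show ?case using gegen_norm2_Suc[OF mu] gegen_norm2_ratio_pos[OF mu] by simp
qed

lemma wint_gegen_expansion:
  assumes mu: "mu > -1/2" and fin: "finite A"
  shows "wint mu ((\<Sum>j\<in>A. smult (x j) (gegen mu j)) * (\<Sum>j\<in>A. smult (y j) (gegen mu j)))
         = (\<Sum>j\<in>A. x j * y j * gegen_norm2 mu j)"
proof -
  have "(\<Sum>j\<in>A. smult (x j) (gegen mu j)) * (\<Sum>j\<in>A. smult (y j) (gegen mu j))
        = (\<Sum>i\<in>A. \<Sum>j\<in>A. smult (x i * y j) (gegen mu i * gegen mu j))"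
    by (simp add: sum_product mult_smult_left mult_smult_right mult_ac)
  then have "wint mu ((\<Sum>j\<in>A. smult (x j) (gegen mu j)) * (\<Sum>j\<in>A. smult (y j) (gegen mu j)))
        = (\<Sum>i\<in>A. \<Sum>j\<in>A. x i * y j * wint mu (gegen mu i * gegen mu j))"
    by (simp add: wint_sum[OF mu] wint_smult)
  also have "\<dots> = (\<Sum>i\<in>A. \<Sum>j\<in>A. if j = i then x i * y i * gegen_norm2 mu i else 0)"
    by (intro sum.cong refl) (auto simp: wint_gegen_orthogonal[OF mu] gegen_norm2_def)
  also have "\<dots> = (\<Sum>i\<in>A. x i * y i * gegen_norm2 mu i)"
    using fin by (simp add: sum.delta)
  finally show ?thesis .
qed

lemma wint_sq_nonneg:
  assumes mu: "mu > -1/2"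
  shows "wint mu (p * p) \<ge> 0"
  by (rule wint_nonneg[OF mu]) simp

lemma wint_sq_eq_0D:
  assumes mu: "mu > -1/2" and z: "wint mu (p * p) = 0"
  shows "p = 0"
proof -
  obtain x where x: "p = (\<Sum>j\<le>degree p. smult (x j) (gegen mu j))" using gegen_span by blast
  have "wint mu (p * p) = (\<Sum>j\<le>degree p. x j * x j * gegen_norm2 mu j)"
    by (subst (1 2) x) (rule wint_gegen_expansion[OF mu], simp)
  then have "(\<Sum>j\<le>degree p. x j * x j * gegen_norm2 mu j) = 0" using z by simp
  moreover have "\<forall>j\<in>{..degree p}. x j * x j * gegen_norm2 mu j \<ge> 0"
  proof
    fix j assume "j \<in> {..degree p}"
    have "x j * x j \<ge> 0" by simp
    then show "x j * x j * gegen_norm2 mu j \<ge> 0" using gegen_norm2_pos[OF mu, of j] by simp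
  qed
  ultimately have "\<forall>j\<in>{..degree p}. x j * x j * gegen_norm2 mu j = 0"
    using sum_nonneg_eq_0_iff[of "{..degree p}" "\<lambda>j. x j * x j * gegen_norm2 mu j"] by blast
  then have "\<forall>j\<in>{..degree p}. x j = 0"
    using gegen_norm2_pos[OF mu] by (metis less_irrefl mult_eq_0_iff)
  then show ?thesis by (subst x) simp
qed

lemma wint_Cauchy_Schwarz:
  assumes mu: "mu > -1/2"
  shows "(wint mu (f * g))\<^sup>2 \<le> wint mu (f * f) * wint mu (g * g)"
proof (cases "wint mu (g * g) = 0")
  case True
  then have "g = 0" by (rule wint_sq_eq_0D[OF mu])
  then show ?thesis by simp
next
  case False
  then have gpos: "wint mu (g * g) > 0" using wint_sq_nonneg[OF mu, of g] by simp
  define s where "s = wint mu (f * g) / wint mu (g * g)"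
  have "0 \<le> wint mu ((f - smult s g) * (f - smult s g))" by (rule wint_sq_nonneg[OF mu])
  also have "(f - smult s g) * (f - smult s g) = f * f - smult (2 * s) (f * g) + smult (s * s) (g * g)"
    by (simp add: algebra_simps smult_add_left[symmetric] mult_smult_left mult_smult_right)
  also have "wint mu \<dots> = wint mu (f * f) - 2 * s * wint mu (f * g) + s * s * wint mu (g * g)"
    by (simp add: wint_add[OF mu] wint_diff[OF mu] wint_smult)
  also have "\<dots> = wint mu (f * f) - (wint mu (f * g))\<^sup>2 / wint mu (g * g)"
    using gpos by (simp add: s_def power2_eq_square field_simps)
  finally have "(wint mu (f * g))\<^sup>2 / wint mu (g * g) \<le> wint mu (f * f)" by simp
  then show ?thesis using gpos by (simp add: divide_le_eq)
qed

lemma wint_sq_pos: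
  assumes lam: "lam > -1/2" and "p \<noteq> 0"
  shows "wint lam (p * p) > 0"
  using wint_sq_nonneg[OF lam, of p] wint_sq_eq_0D[OF lam, of p] assms(2) by force

section \<open>Derivatives of Gegenbauer polynomials\<close>

lemma gegen_coeff_pderiv:
  assumes lam: "lam > -1/2" and k: "k \<ge> 1"
  shows "real (i+1) * gegen_coeff lam k (i+1) = real k * gegen_coeff (lam+1) (k-1) i"
proof (induction "k - i" arbitrary: i rule: less_induct)
  case less
  consider "i \<ge> k" | "i = k - 1" | "i + 2 = k" | "i + 3 \<le> k" using k by linarith
  then show ?case
  proof cases
    case 1 then show ?thesis using gegen_coeff_above[of "k-1" i "lam+1"] gegen_coeff_above[of k "i+1" lam] k by simp
  next
    case 2 then show ?thesis using k by simp
  next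
    case 3
    then have "k - (i+1) = 1" "k - 1 - i = 1" by auto
    then have "gegen_coeff lam k (i+1) = 0" "gegen_coeff (lam+1) (k-1) i = 0" by (auto intro!: gegen_coeff_parity)
    then show ?thesis by simp
  next
    case 4
    define b where "b = i + 3"
    have lt: "k - (i+2) < k - i" using 4 by simp
    have IH: "real b * gegen_coeff lam k b = real k * gegen_coeff (lam+1) (k-1) (i+2)"
      using less.hyps[OF lt] by (simp add: b_def numeral_3_eq_3)
    have den: "real (i+1) * (real (i+1) + 2*lam) - real k * (real k + 2*lam)
             = real i * (real i + 2*(lam+1)) - real (k-1) * (real (k-1) + 2*(lam+1))"
      using k by (simp add: of_nat_diff algebra_simps)
    have s1: "gegen_coeff lam k (i+1) = real (b*(i+2)) * gegen_coeff lam k b / (real (i+1) * (real (i+1) + 2*lam) - real k * (real k + 2*lam))"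
      using gegen_coeff_step[of "i+1" k lam] 4 by (simp add: b_def numeral_3_eq_3)
    have s2: "gegen_coeff (lam+1) (k-1) i = real ((i+2)*(i+1)) * gegen_coeff (lam+1) (k-1) (i+2) / (real i * (real i + 2*(lam+1)) - real (k-1) * (real (k-1) + 2*(lam+1)))"
      using gegen_coeff_step[of i "k-1" "lam+1"] 4 by simp
    have "real (i+1) * gegen_coeff lam k (i+1) = real (i+1) * real (i+2) * (real b * gegen_coeff lam k b) / (real i * (real i + 2*(lam+1)) - real (k-1) * (real (k-1) + 2*(lam+1)))"
      unfolding s1 den by (simp add: algebra_simps)
    also have "\<dots> = real k * gegen_coeff (lam+1) (k-1) i"
      unfolding IH s2 by (simp add: algebra_simps)
    finally show ?thesis .
  qed
qed

lemma pderiv_gegen: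
  assumes lam: "lam > -1/2"
  shows "pderiv (gegen lam k) = smult (real k) (gegen (lam+1) (k - 1))"
proof (cases "k = 0")
  case True then show ?thesis by simp
next
  case False
  show ?thesis
  proof (rule poly_eqI)
    fix i
    show "coeff (pderiv (gegen lam k)) i = coeff (smult (real k) (gegen (lam+1) (k - 1))) i"
      using gegen_coeff_pderiv[OF lam, of k i] False by (simp add: coeff_pderiv coeff_gegen)
  qed
qed

definition connection_coeff :: "real \<Rightarrow> nat \<Rightarrow> real" where
  "connection_coeff lam m = gegen_coeff (lam+1) m (m-2) - gegen_coeff lam m (m-2)"

lemma gegen_connection_remainder:
  fixes lam :: real and m :: nat
  assumes m: "m \<ge> 2"
  defines "X \<equiv> gegen (lam+1) m - gegen lam m - smult (connection_coeff lam m) (gegen (lam+1) (m-2))"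
  shows "X = 0 \<or> degree X < m - 2"
proof (rule poly_zero_or_degree_less)
  fix i assume i: "i \<ge> m - 2"
  consider "i = m - 2" | "i = m - 1" | "i \<ge> m" using i m by linarith
  then show "coeff X i = 0"
  proof cases
    case 1 then show ?thesis by (simp add: X_def coeff_gegen connection_coeff_def)
  next
    case 2 then show ?thesis using m by (simp add: X_def coeff_gegen gegen_coeff_parity gegen_coeff_above)
  next
    case 3 then show ?thesis using m
      by (cases "i = m") (simp_all add: X_def coeff_gegen gegen_coeff_above)
  qed
qed

text \<open>The remainder \<open>X\<close> of the connection formula has degree below \<open>m - 2\<close>, so it is orthogonal to
  all three terms for the parameter \<open>lam + 1\<close>; for \<open>gegen lam m\<close> this uses that the weight for
  \<open>lam + 1\<close> is \<open>1 - t\<^sup>2\<close> times the weight for \<open>lam\<close>.\<close>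

lemma gegen_connection:
  assumes lam: "lam > -1/2" and m: "m \<ge> 2"
  shows "gegen (lam+1) m = gegen lam m + smult (connection_coeff lam m) (gegen (lam+1) (m-2))"
proof -
  have lam1: "lam + 1 > -1/2" using lam by simp
  define X where "X = gegen (lam+1) m - gegen lam m - smult (connection_coeff lam m) (gegen (lam+1) (m-2))"
  have deg_X: "X = 0 \<or> degree X < m - 2"
    unfolding X_def by (rule gegen_connection_remainder[OF m])
  then have "one_minus_sq * X = 0 \<or> degree (one_minus_sq * X) < m"
    using degree_mult_le[of one_minus_sq X] m by (auto simp: degree_one_minus_sq)
  then have "wint lam (gegen lam m * (one_minus_sq * X)) = 0"
    by (rule wint_gegen_orthogonal_lower[OF lam])
  then have "wint (lam+1) (gegen lam m * X) = 0"
    by (simp add: wint_param_plus_one one_minus_sq_def mult.left_commute)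
  moreover have "wint (lam+1) (gegen (lam+1) m * X) = 0" "wint (lam+1) (gegen (lam+1) (m-2) * X) = 0"
    using deg_X by (auto intro!: wint_gegen_orthogonal_lower[OF lam1])
  moreover have "X * X = gegen (lam+1) m * X - gegen lam m * X - smult (connection_coeff lam m) (gegen (lam+1) (m-2) * X)"
    by (subst (1) X_def) (simp add: left_diff_distrib mult_smult_left)
  ultimately have "wint (lam+1) (X * X) = 0"
    by (simp add: wint_diff[OF lam1] wint_smult)
  then have "X = 0" by (rule wint_sq_eq_0D[OF lam1])
  then show ?thesis by (simp add: X_def algebra_simps)
qed

definition dgegen_coeff :: "real \<Rightarrow> nat \<Rightarrow> real" where
  "dgegen_coeff lam m = real m * connection_coeff lam (m-1) / real (m-2)"

lemma pderiv_gegen_rec: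
  assumes lam: "lam > -1/2" and m: "m \<ge> 2"
  shows "pderiv (gegen lam m) = smult (real m) (gegen lam (m-1)) + smult (dgegen_coeff lam m) (pderiv (gegen lam (m-2)))"
proof (cases "m = 2")
  case True
  then show ?thesis by (simp add: pderiv_gegen[OF lam] gegen_Suc0 numeral_2_eq_2)
next
  case False
  then have m3: "m \<ge> 3" using m by simp
  have "pderiv (gegen lam m) = smult (real m) (gegen (lam+1) (m-1))" by (simp add: pderiv_gegen[OF lam])
  also have "gegen (lam+1) (m-1) = gegen lam (m-1) + smult (connection_coeff lam (m-1)) (gegen (lam+1) (m-3))"
    using gegen_connection[OF lam, of "m-1"] m3 by (simp add: numeral_3_eq_3)
  finally have e1: "pderiv (gegen lam m) = smult (real m) (gegen lam (m-1)) + smult (real m * connection_coeff lam (m-1)) (gegen (lam+1) (m-3))"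
    by (simp add: smult_add_right)
  have e2: "pderiv (gegen lam (m-2)) = smult (real (m-2)) (gegen (lam+1) (m-3))"
    using m3 by (simp add: pderiv_gegen[OF lam] numeral_3_eq_3 del: of_nat_diff)
  have "real (m-2) \<noteq> 0" using m3 by simp
  then have e3: "dgegen_coeff lam m * real (m-2) = real m * connection_coeff lam (m-1)"
    by (simp add: dgegen_coeff_def del: of_nat_diff)
  have "smult (dgegen_coeff lam m) (pderiv (gegen lam (m-2))) = smult (real m * connection_coeff lam (m-1)) (gegen (lam+1) (m-3))"
    unfolding e2 smult_smult e3 ..
  then show ?thesis using e1 by simp
qed

lemma wint_gegen_pderiv_low:
  assumes lam: "lam > -1/2" and km: "k < m"
  shows "wint lam (gegen lam (m-1) * pderiv (gegen lam k)) = 0"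
proof (cases k)
  case 0 then show ?thesis by simp
next
  case (Suc j)
  have "pderiv (gegen lam k) = smult (real k) (gegen (lam+1) j)" by (simp add: pderiv_gegen[OF lam] Suc)
  then have "pderiv (gegen lam k) = 0 \<or> degree (pderiv (gegen lam k)) < m - 1" using km Suc by auto
  then show ?thesis by (rule wint_gegen_orthogonal_lower[OF lam])
qed

definition dgram :: "real \<Rightarrow> nat \<Rightarrow> nat \<Rightarrow> real" where
  "dgram lam k m = wint lam (pderiv (gegen lam k) * pderiv (gegen lam m))"

lemma dgram_sym: "dgram lam k m = dgram lam m k"
  by (simp add: dgram_def mult.commute)

lemma pderiv_gegen_expansion:
  "pderiv (\<Sum>j\<in>A. smult (x j) (gegen lam j)) = (\<Sum>j\<in>A. smult (x j) (pderiv (gegen lam j)))"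
  by (induction A rule: infinite_finite_induct) (auto simp: pderiv_add pderiv_smult)

lemma wint_pderiv_gegen_expansion:
  assumes lam: "lam > -1/2"
  shows "wint lam ((\<Sum>j\<in>A. smult (x j) (pderiv (gegen lam j))) * (\<Sum>j\<in>A. smult (y j) (pderiv (gegen lam j))))
         = (\<Sum>i\<in>A. \<Sum>j\<in>A. x i * y j * dgram lam i j)"
proof -
  have "(\<Sum>j\<in>A. smult (x j) (pderiv (gegen lam j))) * (\<Sum>j\<in>A. smult (y j) (pderiv (gegen lam j)))
        = (\<Sum>i\<in>A. \<Sum>j\<in>A. smult (x i * y j) (pderiv (gegen lam i) * pderiv (gegen lam j)))"
    by (simp add: sum_product mult_smult_left mult_smult_right mult_ac)
  then show ?thesis by (simp add: wint_sum[OF lam] wint_smult dgram_def)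
qed

lemma dgram_0 [simp]: "dgram lam 0 m = 0" "dgram lam m 0 = 0"
  by (simp_all add: dgram_def)

lemma dgram_rec:
  assumes lam: "lam > -1/2" and km: "k < m" and m: "m \<ge> 2"
  shows "dgram lam k m = dgegen_coeff lam m * dgram lam k (m-2)"
proof -
  have e: "pderiv (gegen lam k) * pderiv (gegen lam m) = smult (real m) (gegen lam (m-1) * pderiv (gegen lam k)) + smult (dgegen_coeff lam m) (pderiv (gegen lam k) * pderiv (gegen lam (m-2)))"
    unfolding pderiv_gegen_rec[OF lam m] by (simp add: distrib_left mult_smult_right mult.commute)
  have "dgram lam k m = real m * wint lam (gegen lam (m-1) * pderiv (gegen lam k)) + dgegen_coeff lam m * dgram lam k (m-2)"
    unfolding dgram_def e by (simp only: wint_add[OF lam] wint_smult)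
  then show ?thesis using wint_gegen_pderiv_low[OF lam km] by simp
qed

lemma dgram_diag:
  assumes lam: "lam > -1/2" and m: "m \<ge> 2"
  shows "dgram lam m m = (real m)\<^sup>2 * gegen_norm2 lam (m-1) + (dgegen_coeff lam m)\<^sup>2 * dgram lam (m-2) (m-2)"
proof -
  let ?a = "smult (real m) (gegen lam (m-1))" and ?b = "smult (dgegen_coeff lam m) (pderiv (gegen lam (m-2)))"
  have "dgram lam m m = wint lam (?a * ?a) + 2 * wint lam (?a * ?b) + wint lam (?b * ?b)"
    unfolding dgram_def pderiv_gegen_rec[OF lam m] by (rule wint_sq_expand[OF lam])
  also have "wint lam (?a * ?a) = (real m)\<^sup>2 * gegen_norm2 lam (m-1)"
    by (simp add: gegen_norm2_def wint_smult mult_smult_left mult_smult_right power2_eq_square)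
  also have "wint lam (?b * ?b) = (dgegen_coeff lam m)\<^sup>2 * dgram lam (m-2) (m-2)"
    by (simp add: dgram_def wint_smult mult_smult_left mult_smult_right power2_eq_square)
  also have "wint lam (?a * ?b) = real m * dgegen_coeff lam m * wint lam (gegen lam (m-1) * pderiv (gegen lam (m-2)))"
    by (simp add: wint_smult mult_smult_left mult_smult_right)
  also have "wint lam (gegen lam (m-1) * pderiv (gegen lam (m-2))) = 0" using m by (intro wint_gegen_pderiv_low[OF lam]) simp
  finally show ?thesis by simp
qed

lemma dgram_Suc0: "dgram lam (Suc 0) (Suc 0) = gegen_norm2 lam 0"
  by (simp add: dgram_def gegen_norm2_def gegen_Suc0 pderiv_pCons one_pCons)

lemma dgram_parity:
  assumes lam: "lam > -1/2"
  shows "odd (k + m) \<Longrightarrow> dgram lam k m = 0"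
proof (induction "k + m" arbitrary: k m rule: less_induct)
  case less
  have below: "dgram lam i j = 0" if ij: "i < j" "i + j = k + m" for i j
  proof (cases "j \<ge> 2")
    case True
    have "i + (j - 2) < k + m" "odd (i + (j - 2))" using ij True less.prems by presburger+
    then have "dgram lam i (j - 2) = 0" by (rule less.hyps)
    then show ?thesis using dgram_rec[OF lam ij(1) True] by simp
  next
    case False
    then have "i = 0" using ij by simp
    then show ?thesis by simp
  qed
  have "k \<noteq> m" using less.prems by auto
  then show ?case using below[of k m] below[of m k] dgram_sym[of lam k m] by linarith
qed

lemma gegen_norm2_ratio_formula:
  assumes mu: "mu > -1/2" and k: "k \<ge> 1"
  shows "gegen_norm2_ratio mu k = real (k+1) * (real k + 2*mu) / (4*(real k + mu)*(real k + 1 + mu))"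
proof -
  have nz: "real k + mu \<noteq> 0" "real k + 1 + mu \<noteq> 0" using mu k by auto
  have "gegen_norm2_ratio mu k = (real k+2)*(real k+1)/(4*(real k+1+mu)) - (real k+1)*real k/(4*(real k+mu))"
    by (simp add: gegen_norm2_ratio_def algebra_simps)
  also have "\<dots> = (real k+1)*(real k+2*mu)/(4*(real k+mu)*(real k+1+mu))" using nz by (simp add: divide_simps, (algebra)?)
  finally show ?thesis by (simp add: add_ac)
qed

lemma gegen_norm2_ratio_0:
  assumes mu: "mu > -1/2"
  shows "gegen_norm2_ratio mu 0 = 1 / (2 * (1 + mu))"
proof -
  have nz: "1 + mu \<noteq> 0" using mu by auto
  show ?thesis unfolding gegen_norm2_ratio_def by (simp add: divide_simps nz)
qed

lemma connection_coeff_formula: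
  assumes lam: "lam > -1/2" and m: "m \<ge> 2"
  shows "connection_coeff lam m = real m * (real m - 1) / (4*(real m - 1 + lam)*(real m + lam))"
proof -
  obtain j where j: "m = j + 2" using m by (metis add.commute le_add_diff_inverse)
  have lam1: "lam + 1 > -1/2" using lam by simp
  have nz: "real j + 1 + lam \<noteq> 0" "real j + 2 + lam \<noteq> 0" using lam by auto
  have e: "j + 2 - 2 = j" by simp
  have "connection_coeff lam m = (- real ((j+2)*(j+1)))/(4*(real j+1+(lam+1))) - (- real ((j+2)*(j+1)))/(4*(real j+1+lam))"
    unfolding connection_coeff_def j e gegen_coeff_second[OF lam] gegen_coeff_second[OF lam1] ..
  also have "\<dots> = real ((j+2)*(j+1))/(4*(real j+1+lam)*(real j+2+lam))" using nz by (simp add: divide_simps, (algebra)?)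
  finally show ?thesis by (simp add: j algebra_simps)
qed

lemma dgegen_coeff_formula:
  assumes lam: "lam > -1/2" and m: "m \<ge> 3"
  shows "dgegen_coeff lam m = real m * (real m - 1) / (4*(real m - 2 + lam)*(real m - 1 + lam))"
proof -
  have "connection_coeff lam (m-1) = real (m-1) * (real (m-1) - 1) / (4*(real (m-1) - 1 + lam)*(real (m-1) + lam))"
    using m by (intro connection_coeff_formula[OF lam]) auto
  then have k: "connection_coeff lam (m-1) = (real m - 1) * (real m - 2) / (4*(real m - 2 + lam)*(real m - 1 + lam))"
    using m by (simp add: of_nat_diff algebra_simps)
  have r: "real (m - 2) = real m - 2" using m by simp
  have nz: "real m - 2 \<noteq> 0" using m by auto
  show ?thesis unfolding dgegen_coeff_def k r using nz by (simp add: divide_simps)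
qed

section \<open>The derivative form in the orthonormal basis\<close>

text \<open>In the orthonormal basis \<open>gegen lam k / sqrt (gegen_norm2 lam k)\<close> the form
  \<open>p \<mapsto> wint lam (pderiv p * pderiv p)\<close> has the matrix
  \<open>A k m = dgram lam k m / sqrt (gegen_norm2 lam k * gegen_norm2 lam m)\<close>; \<open>dmat_diag\<close> is its
  diagonal and \<open>dmat_sq\<close> holds the squares of its entries. The index sets \<open>parity_class m\<close>
  carry the two blocks of \<open>A\<close>.\<close>

definition dmat_diag :: "real \<Rightarrow> nat \<Rightarrow> real" where
  "dmat_diag lam m = dgram lam m m / gegen_norm2 lam m"

definition dmat_sq :: "real \<Rightarrow> nat \<Rightarrow> nat \<Rightarrow> real" where
  "dmat_sq lam k m = (dgram lam k m)\<^sup>2 / (gegen_norm2 lam k * gegen_norm2 lam m)"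

definition dmat_sq_factor :: "real \<Rightarrow> nat \<Rightarrow> real" where
  "dmat_sq_factor lam m = (dgegen_coeff lam m)\<^sup>2 / (gegen_norm2_ratio lam (m-2) * gegen_norm2_ratio lam (m-1))"

lemma gegen_norm2_Suc_Suc:
  assumes lam: "lam > -1/2" and m: "m \<ge> 2"
  shows "gegen_norm2 lam m = gegen_norm2_ratio lam (m-1) * gegen_norm2_ratio lam (m-2) * gegen_norm2 lam (m-2)"
proof -
  obtain j where j: "m = Suc (Suc j)" using m by (metis add_2_eq_Suc le_Suc_ex)
  show ?thesis unfolding j using gegen_norm2_Suc[OF lam, of "Suc j"] gegen_norm2_Suc[OF lam, of j] by simp
qed

lemma dmat_diag_rec:
  assumes lam: "lam > -1/2" and m: "m \<ge> 2"
  shows "dmat_diag lam m = (real m)\<^sup>2 / gegen_norm2_ratio lam (m-1) + dmat_sq_factor lam m * dmat_diag lam (m-2)"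
proof -
  have s1: "gegen_norm2_ratio lam (m-1) > 0" "gegen_norm2_ratio lam (m-2) > 0" using gegen_norm2_ratio_pos[OF lam] by auto
  have n2: "gegen_norm2 lam (m-2) > 0" by (rule gegen_norm2_pos[OF lam])
  have n1: "gegen_norm2 lam (m-1) = gegen_norm2_ratio lam (m-2) * gegen_norm2 lam (m-2)"
    using gegen_norm2_Suc[OF lam, of "m-2"] m by (simp add: Suc_diff_Suc numeral_2_eq_2)
  have nm: "gegen_norm2 lam m = gegen_norm2_ratio lam (m-1) * gegen_norm2_ratio lam (m-2) * gegen_norm2 lam (m-2)" by (rule gegen_norm2_Suc_Suc[OF lam m])
  have nz: "gegen_norm2_ratio lam (m-1) \<noteq> 0" "gegen_norm2_ratio lam (m-2) \<noteq> 0" "gegen_norm2 lam (m-2) \<noteq> 0" using s1 n2 by auto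
  show ?thesis
    unfolding dmat_diag_def dmat_sq_factor_def dgram_diag[OF lam m] nm n1
    by (simp add: divide_simps nz power2_eq_square; algebra)
qed

lemma dmat_sq_rec:
  assumes lam: "lam > -1/2" and m: "m \<ge> 2" and km: "k < m"
  shows "dmat_sq lam k m = dmat_sq_factor lam m * dmat_sq lam k (m-2)"
proof -
  have s1: "gegen_norm2_ratio lam (m-1) > 0" "gegen_norm2_ratio lam (m-2) > 0" using gegen_norm2_ratio_pos[OF lam] by auto
  have n2: "gegen_norm2 lam (m-2) > 0" "gegen_norm2 lam k > 0" using gegen_norm2_pos[OF lam] by auto
  have nm: "gegen_norm2 lam m = gegen_norm2_ratio lam (m-1) * gegen_norm2_ratio lam (m-2) * gegen_norm2 lam (m-2)" by (rule gegen_norm2_Suc_Suc[OF lam m])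
  have nz: "gegen_norm2_ratio lam (m-1) \<noteq> 0" "gegen_norm2_ratio lam (m-2) \<noteq> 0" "gegen_norm2 lam (m-2) \<noteq> 0" "gegen_norm2 lam k \<noteq> 0" using s1 n2 by auto
  show ?thesis
    unfolding dmat_sq_def dmat_sq_factor_def dgram_rec[OF lam km m] nm
    by (simp add: divide_simps nz power2_eq_square; algebra)
qed

lemma dmat_sq_sym: "dmat_sq lam k m = dmat_sq lam m k"
  by (simp add: dmat_sq_def dgram_sym mult.commute)

lemma dmat_sq_diag: "dmat_sq lam m m = (dmat_diag lam m)\<^sup>2"
  by (simp add: dmat_sq_def dmat_diag_def power2_eq_square)

lemma dmat_sq_factor_formula:
  assumes lam: "lam > -1/2" and m: "m \<ge> 3"
  shows "dmat_sq_factor lam m = real m * (real m - 1) * (real m + lam) / ((real m - 2 + lam) * (real m - 2 + 2*lam) * (real m - 1 + 2*lam))"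
    and "(real m)\<^sup>2 / gegen_norm2_ratio lam (m-1) = 4 * real m * (real m - 1 + lam) * (real m + lam) / (real m - 1 + 2*lam)"
proof -
  have s1: "gegen_norm2_ratio lam (m-1) = real m * (real m - 1 + 2*lam) / (4*(real m - 1 + lam)*(real m + lam))"
    using gegen_norm2_ratio_formula[OF lam, of "m-1"] m by (simp add: of_nat_diff algebra_simps)
  have s2: "gegen_norm2_ratio lam (m-2) = (real m - 1) * (real m - 2 + 2*lam) / (4*(real m - 2 + lam)*(real m - 1 + lam))"
    using gegen_norm2_ratio_formula[OF lam, of "m-2"] m by (simp add: of_nat_diff algebra_simps)
  have g: "dgegen_coeff lam m = real m * (real m - 1) / (4*(real m - 2 + lam)*(real m - 1 + lam))"
    by (rule dgegen_coeff_formula[OF lam m])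
  have p: "real m - 2 + lam > 0" "real m - 1 + lam > 0" "real m + lam > 0"
          "real m - 2 + 2*lam > 0" "real m - 1 + 2*lam > 0" "real m - 1 > 0" "real m > 0"
    using lam m by auto
  have nz: "real m - 2 + lam \<noteq> 0" "real m - 1 + lam \<noteq> 0" "real m + lam \<noteq> 0"
          "real m - 2 + 2*lam \<noteq> 0" "real m - 1 + 2*lam \<noteq> 0" "real m - 1 \<noteq> 0" "real m \<noteq> 0"
    using p by auto
  show "dmat_sq_factor lam m = real m * (real m - 1) * (real m + lam) / ((real m - 2 + lam) * (real m - 2 + 2*lam) * (real m - 1 + 2*lam))"
    unfolding dmat_sq_factor_def s1 s2 g using nz by (simp add: divide_simps power2_eq_square; simp add: algebra_simps)
  show "(real m)\<^sup>2 / gegen_norm2_ratio lam (m-1) = 4 * real m * (real m - 1 + lam) * (real m + lam) / (real m - 1 + 2*lam)"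
    unfolding s1 using nz by (simp add: divide_simps power2_eq_square, (algebra)?)
qed

definition parity_class :: "nat \<Rightarrow> nat set" where
  "parity_class m = {k. k \<le> m \<and> even (m - k)}"

lemma parity_class_fin [simp]: "finite (parity_class m)"
  by (simp add: parity_class_def)

lemma parity_class_0: "parity_class 0 = {0}"
  by (auto simp: parity_class_def)

lemma parity_class_Suc0 [simp]: "parity_class (Suc 0) = {Suc 0}"
  unfolding parity_class_def by (auto; presburger)

lemma parity_class_step:
  assumes "m \<ge> 2"
  shows "parity_class m = insert m (parity_class (m-2))" "m \<notin> parity_class (m-2)"
proof -
  show "parity_class m = insert m (parity_class (m-2))"
  proof (intro set_eqI iffI)
    fix k assume "k \<in> parity_class m"
    then have "k \<le> m" "even (m - k)" by (auto simp: parity_class_def)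
    then show "k \<in> insert m (parity_class (m-2))" using assms unfolding parity_class_def by (auto; presburger)
  next
    fix k assume "k \<in> insert m (parity_class (m-2))"
    then show "k \<in> parity_class m" using assms unfolding parity_class_def by (auto; presburger)
  qed
  show "m \<notin> parity_class (m-2)" using assms by (auto simp: parity_class_def)
qed

lemma parity_class_le: "k \<in> parity_class m \<Longrightarrow> k \<le> m"
  by (simp add: parity_class_def)

lemma parity_class_split:
  assumes n: "n \<ge> 1"
  shows "{..n} = parity_class n \<union> parity_class (n-1)" "parity_class n \<inter> parity_class (n-1) = {}"
proof -
  show "{..n} = parity_class n \<union> parity_class (n-1)"
    using n unfolding parity_class_def by (auto; presburger)
  show "parity_class n \<inter> parity_class (n-1) = {}"
    using n unfolding parity_class_def by (auto; presburger)
qed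

lemma parity_class_parity: "k \<in> parity_class m \<Longrightarrow> even k = even m"
  unfolding parity_class_def by auto

definition dmat_col :: "real \<Rightarrow> nat \<Rightarrow> real" where
  "dmat_col lam m = (\<Sum>k\<in>parity_class m. dmat_sq lam k m)"

definition dmat_frob :: "real \<Rightarrow> nat \<Rightarrow> real" where
  "dmat_frob lam m = (\<Sum>k\<in>parity_class m. \<Sum>j\<in>parity_class m. dmat_sq lam k j)"

definition dmat_trace :: "real \<Rightarrow> nat \<Rightarrow> real" where
  "dmat_trace lam m = (\<Sum>k\<in>parity_class m. dmat_diag lam k)"

lemma dmat_col_rec:
  assumes lam: "lam > -1/2" and m: "m \<ge> 2"
  shows "dmat_col lam m = (dmat_diag lam m)\<^sup>2 + dmat_sq_factor lam m * dmat_col lam (m-2)"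
proof -
  have "dmat_col lam m = dmat_sq lam m m + (\<Sum>k\<in>parity_class (m-2). dmat_sq lam k m)"
    unfolding dmat_col_def parity_class_step(1)[OF m] using parity_class_step(2)[OF m] by simp
  also have "(\<Sum>k\<in>parity_class (m-2). dmat_sq lam k m) = (\<Sum>k\<in>parity_class (m-2). dmat_sq_factor lam m * dmat_sq lam k (m-2))"
  proof (intro sum.cong refl)
    fix k assume "k \<in> parity_class (m-2)"
    then have "k < m" using parity_class_le[of k "m-2"] m by simp
    then show "dmat_sq lam k m = dmat_sq_factor lam m * dmat_sq lam k (m-2)" by (rule dmat_sq_rec[OF lam m])
  qed
  finally show ?thesis by (simp add: dmat_sq_diag dmat_col_def sum_distrib_left)
qed

lemma dmat_frob_rec:
  assumes lam: "lam > -1/2" and m: "m \<ge> 2"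
  shows "dmat_frob lam m = dmat_frob lam (m-2) + 2 * dmat_col lam m - (dmat_diag lam m)\<^sup>2"
proof -
  let ?C = "parity_class (m-2)"
  have nin: "m \<notin> ?C" by (rule parity_class_step(2)[OF m])
  have r: "dmat_col lam m = dmat_sq lam m m + (\<Sum>k\<in>?C. dmat_sq lam k m)"
    unfolding dmat_col_def parity_class_step(1)[OF m] using nin by simp
  have "dmat_frob lam m = (\<Sum>j\<in>insert m ?C. dmat_sq lam m j) + (\<Sum>k\<in>?C. \<Sum>j\<in>insert m ?C. dmat_sq lam k j)"
    unfolding dmat_frob_def parity_class_step(1)[OF m] using nin by simp
  also have "(\<Sum>j\<in>insert m ?C. dmat_sq lam m j) = dmat_sq lam m m + (\<Sum>k\<in>?C. dmat_sq lam k m)"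
    using nin by (simp add: dmat_sq_sym)
  also have "(\<Sum>k\<in>?C. \<Sum>j\<in>insert m ?C. dmat_sq lam k j) = (\<Sum>k\<in>?C. dmat_sq lam k m) + dmat_frob lam (m-2)"
    using nin by (simp add: sum.distrib dmat_frob_def)
  finally show ?thesis using r by (simp add: dmat_sq_diag)
qed

lemma dmat_trace_rec:
  assumes m: "m \<ge> 2"
  shows "dmat_trace lam m = dmat_trace lam (m-2) + dmat_diag lam m"
  unfolding dmat_trace_def parity_class_step(1)[OF m] using parity_class_step(2)[OF m] by simp

section \<open>Closed forms\<close>

text \<open>The rational functions below solve the recurrences for \<open>dmat_diag\<close>, \<open>dmat_col\<close>,
  \<open>dmat_frob\<close> and \<open>dmat_trace\<close> (found by computer algebra); only their recurrence steps and
  initial values are checked.\<close>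

definition diag_formula :: "real \<Rightarrow> real \<Rightarrow> real" where
  "diag_formula x l = 2*x*(x+l)*(x+2*l)/(2*l+1)"

definition frob_denom :: "real \<Rightarrow> real" where
  "frob_denom l = (2*l+1)^2*(2*l+3)*(2*l+5)"

definition diag_sq_num :: "real \<Rightarrow> real \<Rightarrow> real" where
  "diag_sq_num x l = 4*x^2*(x+l)^2*(x+2*l)^2*(2*l+3)*(2*l+5)"

definition col_num :: "real \<Rightarrow> real \<Rightarrow> real" where
  "col_num x l = - 32*x*l^2 - 96*x*l^3 - 64*x*l^4 - 48*x^2*l - 144*x^2*l^2 + 64*x^2*l^3 + 368*x^2*l^4 + 256*x^2*l^5 + 64*x^2*l^6 - 16*x^3 - 48*x^3*l + 288*x^3*l^2 + 856*x^3*l^3 + 688*x^3*l^4 + 192*x^3*l^5 + 200*x^4*l + 700*x^4*l^2 + 696*x^4*l^3 + 224*x^4*l^4 + 40*x^5 + 242*x^5*l + 332*x^5*l^2 + 128*x^5*l^3 + 30*x^6 + 74*x^6*l + 36*x^6*l^2 + 6*x^7 + 4*x^7*l"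

definition frob_num :: "real \<Rightarrow> real \<Rightarrow> real" where
  "frob_num x l = - 224/3*x*l - 752/3*x*l^2 - 608/3*x*l^3 + 112/3*x*l^4 + 256/3*x*l^5 + 64/3*x*l^6 - 112/3*x^2 - 472/3*x^2*l - 176/3*x^2*l^2 + 1216/3*x^2*l^3 + 520*x^2*l^4 + 224*x^2*l^5 + 32*x^2*l^6 - 16*x^3 + 272/3*x^3*l + 1736/3*x^3*l^2 + 2672/3*x^3*l^3 + 1640/3*x^3*l^4 + 416/3*x^3*l^5 + 32/3*x^3*l^6 + 104/3*x^4 + 818/3*x^4*l + 1846/3*x^4*l^2 + 1612/3*x^4*l^3 + 196*x^4*l^4 + 24*x^4*l^5 + 40*x^5 + 186*x^5*l + 258*x^5*l^2 + 136*x^5*l^3 + 24*x^5*l^4 + 62/3*x^6 + 185/3*x^6*l + 154/3*x^6*l^2 + 40/3*x^6*l^3 + 6*x^7 + 10*x^7*l + 4*x^7*l^2 + 3/4*x^8 + 1/2*x^8*l"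

definition trace_num :: "real \<Rightarrow> real \<Rightarrow> real" where
  "trace_num x l = 2*x*l + 2*x*l^2 + 1*x^2 + 3*x^2*l + 1*x^2*l^2 + 1*x^3 + 1*x^3*l + 1/4*x^4"

lemma diag_formula_sq: "l > -1/2 \<Longrightarrow> (diag_formula x l)\<^sup>2 * frob_denom l = diag_sq_num x l"
  by (simp add: diag_formula_def frob_denom_def diag_sq_num_def divide_simps power2_eq_square)

lemma frob_denom_pos: "l > -1/2 \<Longrightarrow> frob_denom l > 0"
  by (simp add: frob_denom_def)

lemma col_num_0: "col_num 0 l = 0" by (simp add: col_num_def)

lemma frob_num_0: "frob_num 0 l = 0" by (simp add: frob_num_def)

lemma trace_num_0: "trace_num 0 l = 0" by (simp add: trace_num_def)

lemma col_num_1: "col_num 1 l = 4*(1+l)^2 * frob_denom l" by (simp add: col_num_def frob_denom_def; algebra)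

lemma col_num_2: "col_num 2 l = diag_sq_num 2 l" unfolding col_num_def diag_sq_num_def by algebra

lemma frob_num_1: "frob_num 1 l - frob_num (-1) l = 4*(1+l)^2 * frob_denom l" by (simp add: frob_num_def frob_denom_def; algebra)

lemma frob_num_step: "frob_num x l - frob_num (x-2) l = 2 * col_num x l - diag_sq_num x l" unfolding frob_num_def col_num_def diag_sq_num_def by algebra

lemma trace_num_step: "trace_num x l - trace_num (x-2) l = 2*x*(x+l)*(x+2*l)" unfolding trace_num_def by algebra

lemma trace_num_factor: "trace_num x l = x*(x+2)*(x+2*l)*(x+2*l+2)/4"
  unfolding trace_num_def by (simp add: field_simps; algebra)

lemma diag_formula_step:
  fixes x l :: real
  assumes "x - 2 + l \<noteq> 0" "x - 1 + l \<noteq> 0" "x + l \<noteq> 0" "x - 2 + 2*l \<noteq> 0" "x - 1 + 2*l \<noteq> 0" "2*l+1 \<noteq> 0"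
  shows "diag_formula x l = 4*x*(x-1+l)*(x+l)/(x-1+2*l) + x*(x-1)*(x+l)/((x-2+l)*(x-2+2*l)*(x-1+2*l)) * diag_formula (x-2) l"
  unfolding diag_formula_def using assms by (simp add: divide_simps) algebra

lemma col_num_step:
  fixes x l :: real
  assumes "x - 2 + l \<noteq> 0" "x - 2 + 2*l \<noteq> 0" "x - 1 + 2*l \<noteq> 0" "frob_denom l \<noteq> 0"
  shows "col_num x l / frob_denom l = diag_sq_num x l / frob_denom l + x*(x-1)*(x+l)/((x-2+l)*(x-2+2*l)*(x-1+2*l)) * (col_num (x-2) l / frob_denom l)"
proof -
  have "col_num x l * ((x-2+l)*(x-2+2*l)*(x-1+2*l)) = diag_sq_num x l * ((x-2+l)*(x-2+2*l)*(x-1+2*l)) + x*(x-1)*(x+l) * col_num (x-2) l"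
    unfolding col_num_def diag_sq_num_def by algebra
  then show ?thesis using assms by (simp add: divide_simps)
qed

lemma dmat_diag_0: "dmat_diag lam 0 = 0" by (simp add: dmat_diag_def)

lemma diag_formula_1:
  assumes "l > -1/2" shows "diag_formula 1 l = 2*(1+l)"
proof -
  have "2*l+1 \<noteq> 0" using assms by simp
  then show ?thesis by (simp add: diag_formula_def divide_simps algebra_simps)
qed

lemma dmat_diag_closed:
  assumes lam: "lam > -1/2"
  shows "dmat_diag lam m = diag_formula (real m) lam"
proof (induction m rule: less_induct)
  case (less m)
  have l2: "2*lam+1 \<noteq> 0" using lam by simp
  consider "m = 0" | "m = 1" | "m = 2" | "m \<ge> 3" by linarith
  then show ?case
  proof cases
    case 1 then show ?thesis by (simp add: dmat_diag_0 diag_formula_def)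
  next
    case 2
    have "dmat_diag lam 1 = gegen_norm2 lam 0 / gegen_norm2 lam 1" by (simp add: dmat_diag_def dgram_Suc0)
    also have "\<dots> = 1 / gegen_norm2_ratio lam 0" using gegen_norm2_Suc[OF lam, of 0] gegen_norm2_pos[OF lam, of 0] by simp
    also have "\<dots> = 2 * (1 + lam)" using gegen_norm2_ratio_0[OF lam] lam by simp
    finally show ?thesis using 2 diag_formula_1[OF lam] by simp
  next
    case 3
    have "dmat_diag lam 2 = 4 / gegen_norm2_ratio lam 1" using dmat_diag_rec[OF lam, of 2] by (simp add: dmat_diag_0)
    also have "gegen_norm2_ratio lam 1 = 2 * (1 + 2*lam) / (4*(1+lam)*(2+lam))"
      using gegen_norm2_ratio_formula[OF lam, of 1] by (simp add: add_ac)
    finally have "dmat_diag lam 2 = 4 / (2 * (1 + 2*lam) / (4*(1+lam)*(2+lam)))" .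
    moreover have "4 / (2 * (1 + 2*lam) / (4*(1+lam)*(2+lam))) = diag_formula 2 lam"
    proof -
      have "1 + lam \<noteq> 0" "2 + lam \<noteq> 0" "1 + 2*lam \<noteq> 0" "2*lam + 1 \<noteq> 0" using lam by auto
      then show ?thesis by (simp add: diag_formula_def divide_simps; simp add: algebra_simps)
    qed
    ultimately show ?thesis using 3 by simp
  next
    case 4
    have IH: "dmat_diag lam (m-2) = diag_formula (real m - 2) lam" using less.IH[of "m-2"] 4 by (simp add: of_nat_diff)
    have nz: "real m - 2 + lam \<noteq> 0" "real m - 1 + lam \<noteq> 0" "real m + lam \<noteq> 0"
      "real m - 2 + 2*lam \<noteq> 0" "real m - 1 + 2*lam \<noteq> 0" "2*lam+1 \<noteq> 0" using lam 4 by auto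
    have "dmat_diag lam m = (real m)\<^sup>2 / gegen_norm2_ratio lam (m-1) + dmat_sq_factor lam m * dmat_diag lam (m-2)"
      using dmat_diag_rec[OF lam, of m] 4 by simp
    also have "\<dots> = 4 * real m * (real m - 1 + lam) * (real m + lam) / (real m - 1 + 2*lam)
         + real m * (real m - 1) * (real m + lam) / ((real m - 2 + lam) * (real m - 2 + 2*lam) * (real m - 1 + 2*lam)) * diag_formula (real m - 2) lam"
      unfolding IH dmat_sq_factor_formula[OF lam 4] ..
    also have "\<dots> = diag_formula (real m) lam" by (rule diag_formula_step[OF nz, symmetric])
    finally show ?thesis .
  qed
qed

lemma dmat_diag_sq_closed:
  assumes lam: "lam > -1/2"
  shows "(dmat_diag lam m)\<^sup>2 = diag_sq_num (real m) lam / frob_denom lam"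
  using dmat_diag_closed[OF lam, of m] diag_formula_sq[OF lam, of "real m"] frob_denom_pos[OF lam]
  by (simp add: eq_divide_eq)

lemma dmat_col_closed:
  assumes lam: "lam > -1/2"
  shows "dmat_col lam m = col_num (real m) lam / frob_denom lam"
proof (induction m rule: less_induct)
  case (less m)
  have D: "frob_denom lam > 0" by (rule frob_denom_pos[OF lam])
  consider "m = 0" | "m = 1" | "m = 2" | "m \<ge> 3" by linarith
  then show ?case
  proof cases
    case 1 then show ?thesis by (simp add: dmat_col_def parity_class_0 dmat_sq_def col_num_0)
  next
    case 2
    have "dmat_col lam 1 = (dmat_diag lam 1)\<^sup>2" by (simp add: dmat_col_def dmat_sq_diag)
    also have "\<dots> = 4*(1+lam)^2" using dmat_diag_closed[OF lam, of 1] diag_formula_1[OF lam] by (simp add: power2_eq_square algebra_simps)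
    finally show ?thesis using 2 D by (simp add: col_num_1)
  next
    case 3
    have "dmat_col lam 2 = (dmat_diag lam 2)\<^sup>2" using dmat_col_rec[OF lam, of 2] by (simp add: dmat_col_def parity_class_0 dmat_sq_def)
    also have "\<dots> = diag_sq_num 2 lam / frob_denom lam" using dmat_diag_sq_closed[OF lam, of 2] by simp
    finally show ?thesis using 3 by (simp add: col_num_2)
  next
    case 4
    have IH: "dmat_col lam (m-2) = col_num (real m - 2) lam / frob_denom lam" using less.IH[of "m-2"] 4 by (simp add: of_nat_diff)
    have nz: "real m - 2 + lam \<noteq> 0" "real m - 2 + 2*lam \<noteq> 0" "real m - 1 + 2*lam \<noteq> 0" "frob_denom lam \<noteq> 0"
      using lam 4 D by auto
    have "dmat_col lam m = (dmat_diag lam m)\<^sup>2 + dmat_sq_factor lam m * dmat_col lam (m-2)" using dmat_col_rec[OF lam, of m] 4 by simp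
    also have "\<dots> = diag_sq_num (real m) lam / frob_denom lam
         + real m * (real m - 1) * (real m + lam) / ((real m - 2 + lam) * (real m - 2 + 2*lam) * (real m - 1 + 2*lam)) * (col_num (real m - 2) lam / frob_denom lam)"
      unfolding dmat_diag_sq_closed[OF lam] IH dmat_sq_factor_formula[OF lam 4] ..
    also have "\<dots> = col_num (real m) lam / frob_denom lam" by (rule col_num_step[OF nz, symmetric])
    finally show ?thesis .
  qed
qed

lemma dmat_frob_closed:
  assumes lam: "lam > -1/2"
  shows "dmat_frob lam m = (frob_num (real m) lam - frob_num (if even m then 0 else -1) lam) / frob_denom lam"
proof (induction m rule: less_induct)
  case (less m)
  have D: "frob_denom lam > 0" by (rule frob_denom_pos[OF lam])
  consider "m = 0" | "m = 1" | "m \<ge> 2" by linarith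
  then show ?case
  proof cases
    case 1 then show ?thesis by (simp add: dmat_frob_def parity_class_0 dmat_sq_def)
  next
    case 2
    have "dmat_frob lam 1 = (dmat_diag lam 1)\<^sup>2" by (simp add: dmat_frob_def dmat_sq_diag)
    also have "\<dots> = 4*(1+lam)^2" using dmat_diag_closed[OF lam, of 1] diag_formula_1[OF lam] by (simp add: power2_eq_square algebra_simps)
    finally show ?thesis using 2 D frob_num_1[of lam] by (simp add: eq_divide_eq)
  next
    case 3
    have IH: "dmat_frob lam (m-2) = (frob_num (real m - 2) lam - frob_num (if even m then 0 else -1) lam) / frob_denom lam"
      using less.IH[of "m-2"] 3 by (simp add: of_nat_diff)
    have "dmat_frob lam m = dmat_frob lam (m-2) + 2 * dmat_col lam m - (dmat_diag lam m)\<^sup>2" by (rule dmat_frob_rec[OF lam 3])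
    also have "\<dots> = (frob_num (real m - 2) lam - frob_num (if even m then 0 else -1) lam + 2 * col_num (real m) lam - diag_sq_num (real m) lam) / frob_denom lam"
      unfolding IH dmat_diag_sq_closed[OF lam] dmat_col_closed[OF lam] using D by (simp add: divide_simps)
    also have "\<dots> = (frob_num (real m) lam - frob_num (if even m then 0 else -1) lam) / frob_denom lam"
      using frob_num_step[of "real m" lam] by simp
    finally show ?thesis .
  qed
qed

lemma dmat_trace_closed:
  assumes lam: "lam > -1/2"
  shows "dmat_trace lam (2*j) = trace_num (real (2*j)) lam / (2*lam+1)"
proof (induction j)
  case 0 then show ?case by (simp add: dmat_trace_def parity_class_0 dmat_diag_0 trace_num_0)
next
  case (Suc j)
  have m: "2 * Suc j \<ge> 2" by simp
  have l2: "2*lam+1 \<noteq> 0" using lam by simp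
  have "dmat_trace lam (2 * Suc j) = dmat_trace lam (2*j) + dmat_diag lam (2 * Suc j)" using dmat_trace_rec[OF m] by simp
  also have "\<dots> = trace_num (real (2*j)) lam / (2*lam+1) + diag_formula (real (2 * Suc j)) lam"
    using Suc dmat_diag_closed[OF lam] by simp
  also have "\<dots> = (trace_num (real (2*j)) lam + 2*real (2 * Suc j)*(real (2 * Suc j)+lam)*(real (2 * Suc j)+2*lam)) / (2*lam+1)"
    by (simp add: diag_formula_def add_divide_distrib)
  also have "trace_num (real (2*j)) lam + 2*real (2 * Suc j)*(real (2 * Suc j)+lam)*(real (2 * Suc j)+2*lam) = trace_num (real (2 * Suc j)) lam"
  proof -
    have "real (2*j) = real (2 * Suc j) - 2" by simp
    then show ?thesis using trace_num_step[of "real (2 * Suc j)" lam] by simp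
  qed
  finally show ?case .
qed

section \<open>Polynomial inequalities\<close>

text \<open>\<open>upper_num n l / frob_denom l\<close> is the square of the upper bound of the theorem. Each gap
  polynomial is written in \<open>X = n - 4\<close> and \<open>Y = 2 * l + 1\<close> with nonnegative coefficients, so
  it is nonnegative whenever \<open>n \<ge> 4\<close> and \<open>l > -1/2\<close>.\<close>

definition upper_num :: "real \<Rightarrow> real \<Rightarrow> real" where
  "upper_num n l = (1/4)*n^2*(n+2*l)^2*(n+2*l+2)^2*(n+2)*(n+2*l+3)*(2*l+3)"

definition frob_even_gap :: "real \<Rightarrow> real \<Rightarrow> real" where
  "frob_even_gap X Y = 1320*Y + 4484*Y^2 + 3184*Y^3 + 888*Y^4 + 104*Y^5 + 4*Y^6 + 4314*X*Y + (28507/3)*X*Y^2 + (16268/3)*X*Y^3 + 1246*X*Y^4 + (358/3)*X*Y^5 + (11/3)*X*Y^6 + (14710/3)*X^2*Y + (24095/3)*X^2*Y^2 + (11002/3)*X^2*Y^3 + 666*X^2*Y^4 + 48*X^2*Y^5 + 1*X^2*Y^6 + (5479/2)*X^3*Y + (42209/12)*X^3*Y^2 + (3781/3)*X^3*Y^3 + (341/2)*X^3*Y^4 + (49/6)*X^3*Y^5 + (1/12)*X^3*Y^6 + (2530/3)*X^4*Y + (2597/3)*X^4*Y^2 + (1397/6)*X^4*Y^3 + 21*X^4*Y^4 + (1/2)*X^4*Y^5 + 146*X^5*Y + 120*X^5*Y^2 + 22*X^5*Y^3 + 1*X^5*Y^4 + (40/3)*X^6*Y + (26/3)*X^6*Y^2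 + (5/6)*X^6*Y^3 + (1/2)*X^7*Y + (1/4)*X^7*Y^2"

definition frob_odd_gap :: "real \<Rightarrow> real \<Rightarrow> real" where
  "frob_odd_gap X Y = 57600 + 96360*Y + 64660*Y^2 + 22268*Y^3 + 4134*Y^4 + 388*Y^5 + 14*Y^6 + 104640*X + 156162*X*Y + (274747/3)*X*Y^2 + (80777/3)*X*Y^3 + (8283/2)*X*Y^4 + (925/3)*X*Y^5 + (49/6)*X*Y^6 + 80944*X^2 + (320944/3)*X^2*Y + (162044/3)*X^2*Y^2 + (39703/3)*X^2*Y^3 + 1623*X^2*Y^4 + (179/2)*X^2*Y^5 + (3/2)*X^2*Y^6 + 34564*X^3 + (80283/2)*X^3*Y + (205049/12)*X^3*Y^2 + (10099/3)*X^3*Y^3 + (619/2)*X^3*Y^4 + (67/6)*X^3*Y^5 + (1/12)*X^3*Y^6 + 8800*X^4 + (26710/3)*X^4*Y + (9287/3)*X^4*Y^2 + (2777/6)*X^4*Y^3 + (57/2)*X^4*Y^4 + (1/2)*X^4*Y^5 + 1336*X^5 + 1166*X^5*Y + 314*X^5*Y^2 + 32*X^5*Y^3 + 1*X^5*Y^4 + 112*X^6 + (250/3)*X^6*Y + (47/3)*X^6*Y^2 + (5/6)*X^6*Y^3 + 4*X^7 + (5/2)*X^7*Y + (1/4)*X^7*Y^2"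

definition lower_gap :: "real \<Rightarrow> real \<Rightarrow> real" where
  "lower_gap X Y = 12960 + 27192*Y + 20410*Y^2 + 7853*Y^3 + 1731*Y^4 + 211*Y^5 + 11*Y^6 + 22032*X + 41118*X*Y + (160435/6)*X*Y^2 + (106087/12)*X*Y^3 + (6647/4)*X*Y^4 + (2033/12)*X*Y^5 + (85/12)*X*Y^6 + 15858*X^2 + (77468/3)*X^2*Y + (42610/3)*X^2*Y^2 + (47327/12)*X^2*Y^3 + 617*X^2*Y^4 + (201/4)*X^2*Y^5 + (3/2)*X^2*Y^6 + 6264*X^3 + 8699*X^3*Y + (93953/24)*X^3*Y^2 + (42419/48)*X^3*Y^3 + (1767/16)*X^3*Y^4 + (313/48)*X^3*Y^5 + (5/48)*X^3*Y^6 + (2933/2)*X^4 + (20273/12)*X^4*Y + (14165/24)*X^4*Y^2 + (4943/48)*X^4*Y^3 + (19/2)*X^4*Y^4 + (5/16)*X^4*Y^5 + (407/2)*X^5 + (751/4)*X^5*Y + (369/8)*X^5*Y^2 + (91/16)*X^5*Y^3 + (5/16)*X^5*Y^4 + (31/2)*X^6 + (131/12)*X^6*Y + (35/24)*X^6*Y^2 + (5/48)*X^6*Y^3 + (1/2)*X^7 + (1/4)*X^7*Y"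

lemma frob_even_gap_eq: "upper_num n l - frob_num n l = frob_even_gap (n-4) (2*l+1)"
  unfolding upper_num_def frob_num_def frob_even_gap_def by algebra

lemma frob_num_minus_one: "frob_num (-1) l = -45/4 - 69/2*l + 18*l^2 + 132*l^3 + 108*l^4 + 24*l^5"
  unfolding frob_num_def by (simp add: power_minus_odd)

lemma frob_odd_gap_eq: "upper_num n l - (frob_num (n-1) l - frob_num (-1) l) = frob_odd_gap (n-4) (2*l+1)"
  unfolding frob_num_minus_one unfolding upper_num_def frob_num_def frob_odd_gap_def by algebra

lemma lower_gap_eq: "frob_num n l - (n+2)*(n+2*l)*(n+l+1/2)^2*trace_num n l*(2*l+3) = lower_gap (n-4) (2*l+1)"
  unfolding frob_num_def trace_num_def lower_gap_def by algebra

lemma frob_even_gap_nonneg: "X \<ge> 0 \<Longrightarrow> Y \<ge> 0 \<Longrightarrow> frob_even_gap X Y \<ge> 0"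
  unfolding frob_even_gap_def by (intro add_nonneg_nonneg mult_nonneg_nonneg zero_le_power; simp)

lemma frob_odd_gap_nonneg: "X \<ge> 0 \<Longrightarrow> Y \<ge> 0 \<Longrightarrow> frob_odd_gap X Y \<ge> 0"
  unfolding frob_odd_gap_def by (intro add_nonneg_nonneg mult_nonneg_nonneg zero_le_power; simp)

lemma lower_gap_nonneg: "X \<ge> 0 \<Longrightarrow> Y \<ge> 0 \<Longrightarrow> lower_gap X Y \<ge> 0"
  unfolding lower_gap_def by (intro add_nonneg_nonneg mult_nonneg_nonneg zero_le_power; simp)

lemma dmat_frob_even_le:
  assumes lam: "lam > -1/2" and n: "even n" "n \<ge> 4"
  shows "dmat_frob lam n \<le> upper_num (real n) lam / frob_denom lam"
proof -
  have "dmat_frob lam n = frob_num (real n) lam / frob_denom lam" using dmat_frob_closed[OF lam, of n] n by (simp add: frob_num_0)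
  moreover have "frob_num (real n) lam \<le> upper_num (real n) lam"
    using frob_even_gap_eq[of "real n" lam] frob_even_gap_nonneg[of "real n - 4" "2*lam+1"] n lam by simp
  ultimately show ?thesis using frob_denom_pos[OF lam] by (simp add: divide_right_mono)
qed

lemma dmat_frob_odd_le:
  assumes lam: "lam > -1/2" and n: "even n" "n \<ge> 4"
  shows "dmat_frob lam (n-1) \<le> upper_num (real n) lam / frob_denom lam"
proof -
  have "odd (n-1)" using n by simp
  then have "dmat_frob lam (n-1) = (frob_num (real n - 1) lam - frob_num (-1) lam) / frob_denom lam"
    using dmat_frob_closed[OF lam, of "n-1"] n by (simp add: of_nat_diff)
  moreover have "frob_num (real n - 1) lam - frob_num (-1) lam \<le> upper_num (real n) lam"
    using frob_odd_gap_eq[of "real n" lam] frob_odd_gap_nonneg[of "real n - 4" "2*lam+1"] n lam by simp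
  ultimately show ?thesis using frob_denom_pos[OF lam] by (simp add: divide_right_mono)
qed

section \<open>The upper bound\<close>

lemma wint_pderiv_sq_parity_split:
  assumes lam: "lam > -1/2" and n: "n \<ge> 1" and p: "p = (\<Sum>j\<le>n. smult (x j) (gegen lam j))"
  shows "wint lam (pderiv p * pderiv p)
       = (\<Sum>i\<in>parity_class n. \<Sum>j\<in>parity_class n. x i * x j * dgram lam i j)
       + (\<Sum>i\<in>parity_class (n-1). \<Sum>j\<in>parity_class (n-1). x i * x j * dgram lam i j)"
proof -
  let ?E = "parity_class n" and ?O = "parity_class (n-1)"
  have split: "{..n} = ?E \<union> ?O" "?E \<inter> ?O = {}" using parity_class_split[OF n] by auto
  have parity: "even i \<noteq> even j" if "i \<in> ?E" "j \<in> ?O" for i j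
    using that n parity_class_parity[of i n] parity_class_parity[of j "n-1"] by auto
  have cross: "x i * x j * dgram lam i j = 0" if "even i \<noteq> even j" for i j
    using that dgram_parity[OF lam, of i j] by auto
  have "(\<Sum>i\<in>?E. \<Sum>j\<in>?O. x i * x j * dgram lam i j) = 0"
    "(\<Sum>i\<in>?O. \<Sum>j\<in>?E. x i * x j * dgram lam i j) = 0"
    using parity cross by (auto intro!: sum.neutral)
  moreover have "wint lam (pderiv p * pderiv p) = (\<Sum>i\<le>n. \<Sum>j\<le>n. x i * x j * dgram lam i j)"
    unfolding p pderiv_gegen_expansion by (rule wint_pderiv_gegen_expansion[OF lam])
  ultimately show ?thesis
    unfolding split(1) double_sum_union_disjoint[OF parity_class_fin parity_class_fin split(2)] by simp
qed

lemma wint_pderiv_sq_le: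
  assumes lam: "lam > -1/2" and n: "even n" "n \<ge> 4" and dp: "degree p \<le> n"
  shows "wint lam (pderiv p * pderiv p) \<le> sqrt (upper_num (real n) lam / frob_denom lam) * wint lam (p * p)"
proof -
  let ?E = "parity_class n" and ?O = "parity_class (n-1)"
  let ?B = "sqrt (upper_num (real n) lam / frob_denom lam)"
  obtain x where x: "p = (\<Sum>j\<le>n. smult (x j) (gegen lam j))" using gegen_span[OF dp] by blast
  let ?Q = "\<lambda>A. \<Sum>k\<in>A. x k * x k * gegen_norm2 lam k"
  have split: "{..n} = ?E \<union> ?O" "?E \<inter> ?O = {}" using parity_class_split[of n] n by auto
  have "wint lam (p * p) = (\<Sum>k\<le>n. x k * x k * gegen_norm2 lam k)"
    by (subst (1 2) x) (rule wint_gegen_expansion[OF lam], simp)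
  then have pp: "wint lam (p * p) = ?Q ?E + ?Q ?O"
    unfolding split(1) using split(2) by (simp add: sum.union_disjoint)
  have Q_nonneg: "?Q A \<ge> 0" for A
    using gegen_norm2_pos[OF lam] by (auto intro!: sum_nonneg simp: less_imp_le)
  have "wint lam (pderiv p * pderiv p)
      = (\<Sum>i\<in>?E. \<Sum>j\<in>?E. x i * x j * dgram lam i j) + (\<Sum>i\<in>?O. \<Sum>j\<in>?O. x i * x j * dgram lam i j)"
    using n by (intro wint_pderiv_sq_parity_split[OF lam _ x]) simp
  also have "\<dots> \<le> sqrt (dmat_frob lam n) * ?Q ?E + sqrt (dmat_frob lam (n-1)) * ?Q ?O"
    unfolding dmat_frob_def dmat_sq_def
    by (intro add_mono quadratic_form_le_frobenius) (auto simp: gegen_norm2_pos[OF lam])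
  also have "\<dots> \<le> ?B * ?Q ?E + ?B * ?Q ?O"
    using dmat_frob_even_le[OF lam n] dmat_frob_odd_le[OF lam n] Q_nonneg
    by (intro add_mono mult_right_mono) auto
  also have "\<dots> = ?B * wint lam (p * p)" unfolding pp by (simp add: algebra_simps)
  finally show ?thesis .
qed

section \<open>The lower bound\<close>

text \<open>Row by row, the orthonormal-basis matrix of the form \<open>p \<mapsto> wint lam (pderiv p * pderiv p)\<close>
  is controlled by its diagonal: test the bound \<open>C\<close> on the polynomial \<open>q\<close> whose derivative
  realises the row, and apply Cauchy--Schwarz.\<close>

lemma dmat_row_le_diag:
  assumes lam: "lam > -1/2" and C: "C \<ge> 0" and S: "finite S" "\<And>m. m \<in> S \<Longrightarrow> m \<le> n"
    and bound: "\<And>q. degree q \<le> n \<Longrightarrow> wint lam (pderiv q * pderiv q) \<le> C * wint lam (q * q)"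
  shows "(\<Sum>m\<in>S. dmat_sq lam k m) \<le> C * dmat_diag lam k"
proof -
  define y where "y m = dgram lam k m / gegen_norm2 lam m" for m
  define q where "q = (\<Sum>m\<in>S. smult (y m) (gegen lam m))"
  define Z where "Z = (\<Sum>m\<in>S. (dgram lam k m)\<^sup>2 / gegen_norm2 lam m)"
  have N_pos: "\<And>m. gegen_norm2 lam m > 0" by (rule gegen_norm2_pos[OF lam])
  have "degree q \<le> n" unfolding q_def
    using S(2) by (intro degree_sum_le) (auto intro: order.trans[OF degree_smult_le])
  moreover have "wint lam (q * q) = Z"
    unfolding q_def wint_gegen_expansion[OF lam S(1)] Z_def y_def
    by (intro sum.cong refl) (use N_pos in \<open>simp add: power2_eq_square field_simps\<close>)
  ultimately have bound_q: "wint lam (pderiv q * pderiv q) \<le> C * Z" using bound by metis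
  have "pderiv (gegen lam k) * pderiv q = (\<Sum>m\<in>S. smult (y m) (pderiv (gegen lam k) * pderiv (gegen lam m)))"
    unfolding q_def pderiv_gegen_expansion by (simp add: sum_distrib_left mult_smult_right)
  then have "wint lam (pderiv (gegen lam k) * pderiv q) = Z"
    unfolding Z_def y_def by (simp add: wint_sum[OF lam] wint_smult dgram_def power2_eq_square)
  then have "Z\<^sup>2 \<le> dgram lam k k * wint lam (pderiv q * pderiv q)"
    using wint_Cauchy_Schwarz[OF lam, of "pderiv (gegen lam k)" "pderiv q"] by (simp add: dgram_def)
  also have "\<dots> \<le> dgram lam k k * (C * Z)"
    using bound_q wint_sq_nonneg[OF lam] by (simp add: dgram_def mult_left_mono)
  finally have "Z * Z \<le> (C * dgram lam k k) * Z" by (simp add: power2_eq_square mult_ac)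
  moreover have "Z \<ge> 0" unfolding Z_def using N_pos by (intro sum_nonneg) (simp add: less_imp_le)
  moreover have "C * dgram lam k k \<ge> 0" using C wint_sq_nonneg[OF lam] by (simp add: dgram_def)
  ultimately have "Z \<le> C * dgram lam k k"
    by (cases "Z = 0") (auto simp: mult_le_cancel_right)
  moreover have "(\<Sum>m\<in>S. dmat_sq lam k m) = Z / gegen_norm2 lam k"
    unfolding Z_def dmat_sq_def sum_divide_distrib by (intro sum.cong refl) (simp add: field_simps)
  ultimately show ?thesis
    using N_pos[of k] by (simp add: dmat_diag_def divide_right_mono)
qed

lemma dmat_frob_le_trace:
  assumes lam: "lam > -1/2" and C: "C \<ge> 0"
    and bound: "\<And>q. degree q \<le> n \<Longrightarrow> wint lam (pderiv q * pderiv q) \<le> C * wint lam (q * q)"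
  shows "dmat_frob lam n \<le> C * dmat_trace lam n"
proof -
  have "dmat_frob lam n \<le> (\<Sum>k\<in>parity_class n. C * dmat_diag lam k)"
    unfolding dmat_frob_def
    by (intro sum_mono dmat_row_le_diag[OF lam C parity_class_fin _ bound]) (auto simp: parity_class_def)
  then show ?thesis by (simp add: dmat_trace_def sum_distrib_left)
qed

lemma lower_formula_trace_le_frob:
  fixes x l :: real
  assumes x: "x \<ge> 4" and l: "l > -1/2"
  shows "(x + 2) * (x + 2*l) * (x + l + 1/2)\<^sup>2 / ((2*l + 1) * (2*l + 5)) * (trace_num x l / (2*l + 1))
         \<le> frob_num x l / frob_denom l"
proof -
  have nz: "2*l + 1 \<noteq> 0" "2*l + 3 \<noteq> 0" "2*l + 5 \<noteq> 0" using l by auto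
  have "(x + 2) * (x + 2*l) * (x + l + 1/2)\<^sup>2 / ((2*l + 1) * (2*l + 5)) * (trace_num x l / (2*l + 1))
        = (x + 2) * (x + 2*l) * (x + l + 1/2)\<^sup>2 * trace_num x l * (2*l + 3) / frob_denom l"
    unfolding frob_denom_def using nz by (simp add: divide_simps; algebra)
  also have "\<dots> \<le> frob_num x l / frob_denom l"
    using lower_gap_eq[of x l] lower_gap_nonneg[of "x - 4" "2*l + 1"] x l frob_denom_pos[OF l]
    by (intro divide_right_mono) auto
  finally show ?thesis .
qed

lemma sqrt_upper_num_div_frob_denom:
  fixes x l :: real
  assumes x: "x \<ge> 1" and l: "l > -1/2"
  shows "sqrt (upper_num x l / frob_denom l)
       = x * (x + 2*l) * (x + 2*l + 2) * sqrt ((x + 2) * (x + 2*l + 3)) / (2 * (2*l + 1) * sqrt (2*l + 5))"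
proof -
  define a where "a = x * (x + 2*l) * (x + 2*l + 2) / (2 * (2*l + 1))"
  define b where "b = (x + 2) * (x + 2*l + 3) / (2*l + 5)"
  have "a \<ge> 0" unfolding a_def using x l by (intro divide_nonneg_pos mult_nonneg_nonneg) auto
  moreover have "upper_num x l / frob_denom l = a\<^sup>2 * b"
    unfolding upper_num_def frob_denom_def a_def b_def using l
    by (simp add: divide_simps power2_eq_square, (algebra)?)
  ultimately have "sqrt (upper_num x l / frob_denom l) = a * sqrt b"
    by (simp add: real_sqrt_mult)
  then show ?thesis unfolding a_def b_def by (simp add: real_sqrt_divide)
qed

section \<open>The Markov constant\<close>

lemma wnorm_poly:
  assumes "lam > -1/2"
  shows "wnorm lam (poly p) = sqrt (wint lam (p * p))"
proof -
  have "(LINT t:{-1<..<1}|lborel. gegen_weight lam t * (poly p t)\<^sup>2)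
        = integral {-1<..<1} (\<lambda>t. gegen_weight lam t * (poly p t)\<^sup>2)"
    by (rule gegen_weight_LINT_eq_integral[OF assms]) (intro continuous_intros continuous_on_poly continuous_on_id)
  then show ?thesis by (simp add: wnorm_def wint_def power2_eq_square)
qed

text \<open>Once some bound \<open>B\<close> shows that the set in the definition of \<open>markov_const\<close> is bounded,
  its supremum is the optimal constant for the quadratic forms.\<close>

lemma markov_const_sq_bounds:
  assumes lam: "lam > -1/2"
    and bound: "\<And>p. degree p \<le> n \<Longrightarrow> wint lam (pderiv p * pderiv p) \<le> B * wint lam (p * p)"
  shows "(markov_const n lam)\<^sup>2 \<le> B"
    and "\<And>q. degree q \<le> n \<Longrightarrow> wint lam (pderiv q * pderiv q) \<le> (markov_const n lam)\<^sup>2 * wint lam (q * q)"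
proof -
  define S where "S = {wnorm lam (poly (pderiv p)) / wnorm lam (poly p) | p :: real poly. degree p \<le> n \<and> p \<noteq> 0}"
  define c where "c = markov_const n lam"
  have c_Sup: "c = Sup S" by (simp add: c_def S_def markov_const_def)
  have ratio: "wnorm lam (poly (pderiv p)) / wnorm lam (poly p)
      = sqrt (wint lam (pderiv p * pderiv p) / wint lam (p * p))" for p
    by (simp add: wnorm_poly[OF lam] real_sqrt_divide)
  have le_sqrt_B: "r \<le> sqrt B" if "r \<in> S" for r
  proof -
    from that obtain p where p: "r = wnorm lam (poly (pderiv p)) / wnorm lam (poly p)" "degree p \<le> n" "p \<noteq> 0"
      by (auto simp: S_def)
    show ?thesis
      using bound[OF p(2)] wint_sq_pos[OF lam p(3)] unfolding p(1) ratio
      by (intro real_sqrt_le_mono) (simp add: divide_le_eq)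
  qed
  have "0 \<in> S"
    unfolding S_def by (intro CollectI exI[of _ 1]) (simp add: wnorm_poly[OF lam])
  moreover have bdd: "bdd_above S" using le_sqrt_B by (intro bdd_aboveI) blast
  ultimately have "0 \<le> c" "c \<le> sqrt B"
    unfolding c_Sup using le_sqrt_B by (auto intro: cSup_upper cSup_least)
  then have "c\<^sup>2 \<le> (sqrt B)\<^sup>2" by (intro power_mono)
  moreover have "B \<ge> 0"
    using \<open>0 \<le> c\<close> \<open>c \<le> sqrt B\<close> real_sqrt_ge_0_iff[of B] by linarith
  ultimately show "(markov_const n lam)\<^sup>2 \<le> B" by (simp add: c_def)
  fix q :: "real poly" assume q: "degree q \<le> n"
  show "wint lam (pderiv q * pderiv q) \<le> (markov_const n lam)\<^sup>2 * wint lam (q * q)"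
  proof (cases "q = 0")
    case False
    have pos: "wint lam (q * q) > 0" by (rule wint_sq_pos[OF lam False])
    have "wnorm lam (poly (pderiv q)) / wnorm lam (poly q) \<in> S" unfolding S_def using q False by blast
    then have "sqrt (wint lam (pderiv q * pderiv q) / wint lam (q * q)) \<le> c"
      unfolding c_Sup ratio by (rule cSup_upper[OF _ bdd])
    then have "(sqrt (wint lam (pderiv q * pderiv q) / wint lam (q * q)))\<^sup>2 \<le> c\<^sup>2"
      using wint_sq_nonneg[OF lam, of "pderiv q"] pos by (intro power_mono) auto
    then have "wint lam (pderiv q * pderiv q) / wint lam (q * q) \<le> c\<^sup>2"
      using wint_sq_nonneg[OF lam, of "pderiv q"] pos by simp
    then show ?thesis using pos by (simp add: c_def divide_le_eq)
  qed simp
qed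

lemma markov_const_sq_upper:
  assumes lam: "lam > -1/2" and n: "even n" "n \<ge> 4"
  shows "(markov_const n lam)\<^sup>2 \<le> sqrt (upper_num (real n) lam / frob_denom lam)"
  by (rule markov_const_sq_bounds(1)[OF lam wint_pderiv_sq_le[OF lam n]])

lemma markov_const_sq_lower:
  assumes lam: "lam > -1/2" and n: "even n" "n \<ge> 4"
  shows "(real n + 2) * (real n + 2*lam) * (real n + lam + 1/2)\<^sup>2 / ((2*lam + 1) * (2*lam + 5))
           \<le> (markov_const n lam)\<^sup>2"
proof -
  let ?L = "(real n + 2) * (real n + 2*lam) * (real n + lam + 1/2)\<^sup>2 / ((2*lam + 1) * (2*lam + 5))"
  have markov: "wint lam (pderiv q * pderiv q) \<le> (markov_const n lam)\<^sup>2 * wint lam (q * q)"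
    if "degree q \<le> n" for q
    by (rule markov_const_sq_bounds(2)[OF lam wint_pderiv_sq_le[OF lam n] that])
  obtain j where j: "n = 2 * j" using n(1) by blast
  have trace: "dmat_trace lam n = trace_num (real n) lam / (2*lam + 1)"
    using dmat_trace_closed[OF lam, of j] j by simp
  have trace_pos: "dmat_trace lam n > 0"
    unfolding trace trace_num_factor using lam n by (simp add: zero_less_mult_iff)
  have "?L * dmat_trace lam n \<le> dmat_frob lam n"
    using dmat_frob_closed[OF lam, of n] n lower_formula_trace_le_frob[of "real n" lam] lam
    unfolding trace by (simp add: frob_num_0)
  also have "\<dots> \<le> (markov_const n lam)\<^sup>2 * dmat_trace lam n"
    using markov by (intro dmat_frob_le_trace[OF lam]) auto
  finally show ?thesis using trace_pos by (rule mult_right_le_imp_le)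
qed

theorem theorem4p2:
  fixes n :: nat and lam :: real
  assumes "even n" and "n \<ge> 4" and "lam > -1/2"
  shows "(real n + 2) * (real n + 2*lam) * (real n + lam + 1/2)\<^sup>2 / ((2*lam + 1) * (2*lam + 5))
           \<le> (markov_const n lam)\<^sup>2 \<and>
         (markov_const n lam)\<^sup>2 \<le>
           real n * (real n + 2*lam) * (real n + 2*lam + 2) * sqrt ((real n + 2) * (real n + 2*lam + 3))
           / (2 * (2*lam + 1) * sqrt (2*lam + 5))"
  using markov_const_sq_lower[OF assms(3,1,2)] markov_const_sq_upper[OF assms(3,1,2)]
    sqrt_upper_num_div_frob_denom[of "real n" lam] assms(2,3)
  by simp

end
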